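(* Let $\mathbb F_\theta^+$ be a single-vertex $k$-graph and $G$ a group, with maps $G\times\mathbb F_\theta^+\to\mathbb F_\theta^+$, $(g,\mu)\mapsto g\cdot\mu$ and $G\times\mathbb F_\theta^+\to G$, $(g,\mu)\mapsto g|_\mu$ satisfying (B1)–(B8). Suppose that for every $\mu\in\mathbb F_\theta^+$ and $h\in G$ there is $g\in G$ with $g|_\mu=h$. Then $\mathcal Q(\mathbb F_\theta^+\bowtie G)$ is isomorphic to the universal C*-algebra $\mathcal A$ generated by a unitary representation $u$ of $G$ and a $*$-representation $v$ of $\mathbb F_\theta^+$ satisfying $u_gv_\mu=v_{g\cdot\mu}u_{g|_\mu}$ for all $\mu\in\mathbb F_\theta^+$, $g\in G$; the isomorphism sends the generating isometry of $(\mu,1_G)$ to $v_\mu$ and that of $(1,g)$ to $u_g$.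
   Context: Single-vertex $k$-graph ($1\le k\le\infty$): a monoid $\mathbb F_\theta^+$ generated by $x^i_{\mathfrak s}$ ($1\le i\le k$, $\mathfrak s\in[m_i]=\{0,\dots,m_i-1\}$) subject to $x^i_{\mathfrak s}x^j_{\mathfrak t}=x^j_{\mathfrak t'}x^i_{\mathfrak s'}$ whenever $\theta_{ij}(\mathfrak s,\mathfrak t)=(\mathfrak t',\mathfrak s')$ ($i<j$, $\theta_{ij}$ bijections $[m_i]\times[m_j]\to[m_j]\times[m_i]$), having unique factorization with respect to the degree map $d(x^i_{\mathfrak s})=e_i\in\mathbb N^k$. A $*$-representation of $\mathbb F_\theta^+$ is a monoid homomorphism $v$ into isometries of a C*-algebra with $\sum_{\mathfrak s\in[m_i]}v_{x^i_{\mathfrak s}}v_{x^i_{\mathfrak s}}^*=1$ for each $i$. Zappa–Szép product: for monoids $U,A$ with maps $a\cdot u\in U$, $a|_u\in A$ satisfying (B1) $1_A\cdot u=u$; (B2) $(ab)\cdot u=a\cdot(b\cdot u)$; (B3) $a\cdot1_U=1_U$; (B4) $a\cdot(uv)=(a\cdot u)(a|_u\cdot v)$; (B5) $a|_{1_U}=a$; (B6) $a|_{uv}=(a|_u)|_v$; (B7) $1_A|_u=1_A$; (B8) $(ab)|_u=a|_{b\cdot u}b|_u$, $U\bowtie A$ is $U\times A$ with $(u,a)(v,b)=(u(a\cdot v),a|_vb)$. Boundary quotient of a left cancellative monoid $P$: with $\mathcal J(P)=\{\varnothing\}\cup\{p_1^{-1}q_1\cdots p_n^{-1}q_nP\}$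 ($pX=\{px\}$, $p^{-1}X=\{y:py\in X\}$) and foundation sets being finite $F\subseteq\mathcal J(P)$ such that every $Y\in\mathcal J(P)$ meets some $X\in F$, $\mathcal Q(P)$ is the universal C*-algebra generated by isometries $v_p$ ($p\in P$) and projections $e_X$ ($X\in\mathcal J(P)$) with $v_pv_q=v_{pq}$, $v_pe_Xv_p^*=e_{pX}$, $e_\varnothing=0$, $e_P=1$, $e_Xe_Y=e_{X\cap Y}$, and $\prod_{X\in F}(1-e_X)=0$ for all foundation sets $F$. *)

theory Defs
  imports "HOL-Analysis.Analysis"
begin

class cstar_algebra = real_normed_algebra_1 + banach +
  fixes scaleC :: "complex \<Rightarrow> 'a \<Rightarrow> 'a"
    and cstar :: "'a \<Rightarrow> 'a"
  assumes scaleC_add_right: "scaleC a (x + y) = scaleC a x + scaleC a y"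
    and scaleC_add_left: "scaleC (a + b) x = scaleC a x + scaleC b x"
    and scaleC_scaleC: "scaleC a (scaleC b x) = scaleC (a * b) x"
    and scaleC_one: "scaleC 1 x = x"
    and scaleR_scaleC: "scaleR r x = scaleC (complex_of_real r) x"
    and norm_scaleC: "norm (scaleC a x) = cmod a * norm x"
    and mult_scaleC_left: "scaleC a x * y = scaleC a (x * y)"
    and mult_scaleC_right: "x * scaleC a y = scaleC a (x * y)"
    and cstar_cstar: "cstar (cstar x) = x"
    and cstar_add: "cstar (x + y) = cstar x + cstar y"
    and cstar_mult: "cstar (x * y) = cstar y * cstar x"
    and cstar_scaleC: "cstar (scaleC a x) = scaleC (cnj a) (cstar x)"
    and cstar_identity: "norm (cstar x * x) = norm x * norm x"

definition isometry :: "'b::cstar_algebra \<Rightarrow> bool" where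
  "isometry x \<longleftrightarrow> cstar x * x = 1"

definition unitary :: "'b::cstar_algebra \<Rightarrow> bool" where
  "unitary x \<longleftrightarrow> cstar x * x = 1 \<and> x * cstar x = 1"

definition projection :: "'b::cstar_algebra \<Rightarrow> bool" where
  "projection x \<longleftrightarrow> cstar x = x \<and> x * x = x"

text \<open>The standard basis vector e_i of N^k (degrees are functions nat => nat).\<close>
definition ebasis :: "nat \<Rightarrow> nat \<Rightarrow> nat" where
  "ebasis i = (\<lambda>j. if j = i then 1 else 0)"

text \<open>A single-vertex k-graph (1 <= k <= infinity): the monoid (the whole type 'p)
with a degree map d into N^k (colours indexed by K = {1..k}, or K = {1..} for
k = infinity; elements of N^infinity are finitely supported), which is a monoid
homomorphism with the unique factorization property, and with finitely many,
but at least one, edges x^i_s of each degree e_i.\<close>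
definition single_vertex_kgraph :: "nat set \<Rightarrow> ('p::monoid_mult \<Rightarrow> nat \<Rightarrow> nat) \<Rightarrow> bool" where
  "single_vertex_kgraph K d \<longleftrightarrow>
     ((\<exists>k\<ge>1. K = {1..k}) \<or> K = {1..}) \<and>
     d 1 = (\<lambda>_. 0) \<and>
     (\<forall>a b. d (a * b) = (\<lambda>j. d a j + d b j)) \<and>
     (\<forall>a. finite {i. d a i \<noteq> 0} \<and> (\<forall>i. i \<notin> K \<longrightarrow> d a i = 0)) \<and>
     (\<forall>\<mu> m n. d \<mu> = (\<lambda>j. m j + n j) \<longrightarrow>
        (\<exists>!ab. d (fst ab) = m \<and> d (snd ab) = n \<and> \<mu> = fst ab * snd ab)) \<and>
     (\<forall>i\<in>K. finite {\<mu>. d \<mu> = ebasis i} \<and> {\<mu>. d \<mu> = ebasis i} \<noteq> {})"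

text \<open>The group G is the type 'g of class group_add (written additively:
identity 0, product g + h); U = the k-graph monoid 'p.\<close>
definition zappa_szep :: "('g::group_add \<Rightarrow> 'p::monoid_mult \<Rightarrow> 'p) \<Rightarrow> ('g \<Rightarrow> 'p \<Rightarrow> 'g) \<Rightarrow> bool" where
  "zappa_szep act restr \<longleftrightarrow>
     (\<forall>u. act 0 u = u) \<and>
     (\<forall>a b u. act (a + b) u = act a (act b u)) \<and>
     (\<forall>a. act a 1 = 1) \<and>
     (\<forall>a u v. act a (u * v) = act a u * act (restr a u) v) \<and>
     (\<forall>a. restr a 1 = a) \<and>
     (\<forall>a u v. restr a (u * v) = restr (restr a u) v) \<and>
     (\<forall>u. restr 0 u = 0) \<and>
     (\<forall>a b u. restr (a + b) u = restr a (act b u) + restr b u)"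

definition zs_mult :: "('g::group_add \<Rightarrow> 'p::monoid_mult \<Rightarrow> 'p) \<Rightarrow> ('g \<Rightarrow> 'p \<Rightarrow> 'g)
    \<Rightarrow> 'p \<times> 'g \<Rightarrow> 'p \<times> 'g \<Rightarrow> 'p \<times> 'g" where
  "zs_mult act restr x y = (fst x * act (snd x) (fst y), restr (snd x) (fst y) + snd y)"

text \<open>For a monoid on the whole type 'a with multiplication m:
cword m [(p1,q1),...,(pn,qn)] = p1^-1 q1 ... pn^-1 qn P.\<close>
fun cword :: "('a \<Rightarrow> 'a \<Rightarrow> 'a) \<Rightarrow> ('a \<times> 'a) list \<Rightarrow> 'a set" where
  "cword m [] = UNIV"
| "cword m (pq # ps) = {y. m (fst pq) y \<in> (m (snd pq)) ` cword m ps}"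

definition constructible :: "('a \<Rightarrow> 'a \<Rightarrow> 'a) \<Rightarrow> 'a set set" where
  "constructible m = insert {} {cword m ps | ps. ps \<noteq> []}"

definition foundation_set :: "('a \<Rightarrow> 'a \<Rightarrow> 'a) \<Rightarrow> 'a set set \<Rightarrow> bool" where
  "foundation_set m F \<longleftrightarrow> finite F \<and> F \<subseteq> constructible m \<and>
     (\<forall>Y\<in>constructible m. Y \<noteq> {} \<longrightarrow> (\<exists>X\<in>F. X \<inter> Y \<noteq> {}))"

text \<open>A representation of the defining relations of the boundary quotient Q(P)
in a C*-algebra 'b: isometries V p and projections E X.\<close>
definition boundary_rep :: "('a \<Rightarrow> 'a \<Rightarrow> 'a) \<Rightarrow> ('a \<Rightarrow> 'b::cstar_algebra) \<Rightarrow> ('a set \<Rightarrow> 'b) \<Rightarrow> bool" where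
  "boundary_rep m V E \<longleftrightarrow>
     (\<forall>p. isometry (V p)) \<and>
     (\<forall>p q. V (m p q) = V p * V q) \<and>
     (\<forall>X\<in>constructible m. projection (E X)) \<and>
     (\<forall>p. \<forall>X\<in>constructible m. V p * E X * cstar (V p) = E (m p ` X)) \<and>
     E {} = 0 \<and> E UNIV = 1 \<and>
     (\<forall>X\<in>constructible m. \<forall>Y\<in>constructible m. E X * E Y = E (X \<inter> Y)) \<and>
     (\<forall>F. foundation_set m F \<longrightarrow>
        (\<forall>xs. distinct xs \<and> set xs = F \<longrightarrow> prod_list (map (\<lambda>X. 1 - E X) xs) = 0))"

definition covariant_rep :: "nat set \<Rightarrow> ('p::monoid_mult \<Rightarrow> nat \<Rightarrow> nat) \<Rightarrow>
    ('g::group_add \<Rightarrow> 'p \<Rightarrow> 'p) \<Rightarrow> ('g \<Rightarrow> 'p \<Rightarrow> 'g) \<Rightarrow>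
    ('g \<Rightarrow> 'b::cstar_algebra) \<Rightarrow> ('p \<Rightarrow> 'b) \<Rightarrow> bool" where
  "covariant_rep K d act restr U W \<longleftrightarrow>
     (\<forall>g. unitary (U g)) \<and> (\<forall>g h. U (g + h) = U g * U h) \<and>
     (\<forall>\<mu>. isometry (W \<mu>)) \<and> W 1 = 1 \<and> (\<forall>\<mu> \<nu>. W (\<mu> * \<nu>) = W \<mu> * W \<nu>) \<and>
     (\<forall>i\<in>K. (\<Sum>\<mu>\<in>{\<mu>. d \<mu> = ebasis i}. W \<mu> * cstar (W \<mu>)) = 1) \<and>
     (\<forall>g \<mu>. U g * W \<mu> = W (act g \<mu>) * U (restr g \<mu>))"

end

(*
  A boundary representation V of the Zappa-Szep product restricts to u_g = V(1, g) and
  v_mu = V(mu, 0): the product rule (1, g)(mu, 0) = (g.mu, 0)(1, g|mu) becomes covariance,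
  and for each colour i the ideals (mu, 0)P with d(mu) = e_i are pairwise disjoint and form a
  foundation set, which turns the foundation relation into the Cuntz-Krieger relation.
  V is determined by these restrictions since (mu, g) = (mu, 0)(1, g), and E is then
  determined on p^-1 q X = p^-1 (qX meet pP).

  Conversely, as G is a group every constructible ideal is S x G for a finite union S of
  principal right ideals of the k-graph. Membership in such an S depends only on the initial
  segment of some degree N, and E(S x G) := sum of v_rho v_rho^* over rho in S with d(rho) = N
  does not depend on N by the Cuntz-Krieger relation. These projections multiply correctly
  because the v_rho v_rho^* of a fixed degree are orthogonal, and a foundation set must meet
  every (rho, 0)P, which forces the foundation relation.

  The orthogonality is the only analytic input: projections summing to 1 in a C*-algebra are
  mutually orthogonal. Without spectral theory it reduces to the fact that a self-adjoint b
  with |1 + b| <= 1 and |1 - b| <= 1 vanishes, which follows from a Cauchy estimate for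
  z |-> (1 + z b / n)^n, a polynomial whose norm grows only like (1 + |Im z|^2 |b|^2 / n^2)^(n/2).
*)

theory Submission
  imports Defs "HOL-Library.Function_Algebras"
begin

lemma scaleC_zero_left [simp]: "scaleC 0 (x::'b::cstar_algebra) = 0"
proof -
  have "scaleC 0 x = scaleC 0 x + scaleC 0 x"
    using scaleC_add_left[of 0 0 x] by simp
  then show ?thesis by simp
qed

lemma scaleC_of_real: "scaleC (complex_of_real r) (x::'b::cstar_algebra) = scaleR r x"
  by (simp add: scaleR_scaleC)

lemma scaleC_zero_right [simp]: "scaleC a (0::'b::cstar_algebra) = 0"
proof -
  have "scaleC a (0::'b) = scaleC a 0 + scaleC a 0"
    using scaleC_add_right[of a 0 0] by simp
  then show ?thesis by simp
qed

lemma scaleC_sum_right: "scaleC a (sum f A) = (\<Sum>i\<in>A. scaleC a (f i :: 'b::cstar_algebra))"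
  by (induction A rule: infinite_finite_induct) (auto simp: scaleC_add_right)

lemma scaleC_sum_left: "scaleC (sum f A) (x::'b::cstar_algebra) = (\<Sum>i\<in>A. scaleC (f i) x)"
  by (induction A rule: infinite_finite_induct) (auto simp: scaleC_add_left)

lemma cstar_zero [simp]: "cstar (0::'b::cstar_algebra) = 0"
proof -
  have "cstar (0::'b) = cstar 0 + cstar 0" using cstar_add[of 0 0] by simp
  then show ?thesis by simp
qed

lemma cstar_one [simp]: "cstar (1::'b::cstar_algebra) = 1"
proof -
  have "cstar 1 = cstar (cstar (cstar 1 * 1))" by (simp add: cstar_cstar)
  also have "\<dots> = cstar (1::'b)" by (simp add: cstar_mult cstar_cstar)
  finally have "cstar (1::'b) = cstar (cstar (cstar 1)) * cstar (cstar 1)"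
    by (simp only: cstar_cstar mult_1_right)
  then show ?thesis
    by (metis cstar_cstar cstar_mult mult_1_left)
qed

lemma cstar_minus [simp]: "cstar (- x) = - cstar (x::'b::cstar_algebra)"
proof -
  have "cstar (- x) + cstar x = 0" by (simp flip: cstar_add)
  then show ?thesis by (simp add: eq_neg_iff_add_eq_0)
qed

lemma cstar_diff [simp]: "cstar (x - y) = cstar x - cstar (y::'b::cstar_algebra)"
  using cstar_add[of x "- y"] by simp

lemma cstar_sum: "cstar (sum f A) = (\<Sum>i\<in>A. cstar (f i :: 'b::cstar_algebra))"
  by (induction A rule: infinite_finite_induct) (auto simp: cstar_add)

lemma cstar_scaleR [simp]: "cstar (scaleR r x) = scaleR r (cstar (x::'b::cstar_algebra))"
  by (simp add: scaleR_scaleC cstar_scaleC)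

lemma cstar_power: "cstar (x ^ n) = (cstar (x::'b::cstar_algebra)) ^ n"
  by (induction n) (simp_all add: cstar_mult power_commutes)

lemma projection_norm_le_1:
  assumes "projection (P::'b::cstar_algebra)"
  shows "norm P \<le> 1"
proof -
  have "norm P = norm P * norm P"
    using assms cstar_identity[of P] by (simp add: projection_def)
  then have "norm P = 0 \<or> norm P = 1" by (metis mult_cancel_right1)
  then show ?thesis by auto
qed

lemma projection_one_minus: "projection (P::'b::cstar_algebra) \<Longrightarrow> projection (1 - P)"
  by (simp add: projection_def algebra_simps)

lemma isometry_eq_1_if_idempotent:
  fixes V :: "'b::cstar_algebra"
  assumes "isometry V" and "V = V * V"
  shows "V = 1"
proof -
  have "cstar V * V = cstar V * (V * V)" using assms(2) by simp
  then show ?thesis using assms(1) by (simp add: isometry_def flip: mult.assoc)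
qed

lemma prod_list_one_minus_orthogonal:
  fixes q :: "'a \<Rightarrow> 'b::ring_1"
  assumes "distinct xs" and "\<And>x y. x \<in> set xs \<Longrightarrow> y \<in> set xs \<Longrightarrow> x \<noteq> y \<Longrightarrow> q x * q y = 0"
  shows "prod_list (map (\<lambda>x. 1 - q x) xs) = 1 - (\<Sum>x\<in>set xs. q x)"
  using assms
proof (induction xs)
  case (Cons x xs)
  have orth: "q x * (\<Sum>y\<in>set xs. q y) = 0"
    using Cons.prems by (auto simp: sum_distrib_left intro!: sum.neutral)
  have "prod_list (map (\<lambda>x. 1 - q x) (x # xs)) = (1 - q x) * (1 - (\<Sum>y\<in>set xs. q y))"
    using Cons by auto
  also have "\<dots> = 1 - q x - (\<Sum>y\<in>set xs. q y) + q x * (\<Sum>y\<in>set xs. q y)"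
    by (simp add: algebra_simps)
  finally show ?case using orth Cons.prems by simp
qed simp


section \<open>Projections summing to one are orthogonal\<close>

lemma norm_power_two_power_selfadjoint:
  assumes "cstar h = (h::'b::cstar_algebra)"
  shows "norm (h ^ (2 ^ k)) = norm h ^ (2 ^ k)"
proof (induction k)
  case (Suc k)
  have "norm (h ^ (2 ^ Suc k)) = norm (cstar (h ^ (2 ^ k)) * h ^ (2 ^ k))"
    by (simp add: cstar_power assms mult_2 flip: power_add)
  also have "\<dots> = norm h ^ (2 ^ Suc k)"
    by (simp add: cstar_identity Suc.IH mult_2 flip: power_add)
  finally show ?case .
qed simp

lemma power_Suc_add_orthogonal:
  fixes A B :: "'b::ring_1"
  assumes "A * B = 0" "B * A = 0"
  shows "(A + B) ^ Suc n = A ^ Suc n + B ^ Suc n"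
proof (induction n)
  case (Suc n)
  have "A * B ^ Suc n = 0" "B * A ^ Suc n = 0"
    using assms by (simp_all flip: mult.assoc)
  then have "(A + B) * (A ^ Suc n + B ^ Suc n) = A * A ^ Suc n + B * B ^ Suc n"
    by (simp add: distrib_left distrib_right)
  then show ?case
    by (simp only: power_Suc[of "A + B" "Suc n"] Suc.IH) simp
qed simp

lemma le_if_power_le_2_mult_power:
  fixes x y :: real
  assumes "0 \<le> y" and bound: "\<And>k. x ^ (2 ^ k) \<le> 2 * y ^ (2 ^ k)"
  shows "x \<le> y"
proof (rule ccontr)
  assume "\<not> x \<le> y"
  then have "y < x" by simp
  show False
  proof (cases "y = 0")
    case True
    then show False using bound[of 0] \<open>y < x\<close> by simp
  next
    case False
    define r where "r = x / y"
    have r1: "r > 1" using \<open>y < x\<close> \<open>0 \<le> y\<close> False by (simp add: r_def)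
    obtain n :: nat where n: "1 < real n * (r - 1)"
      using r1 reals_Archimedean3[of "r - 1"] by auto
    have "1 + real (2 ^ n) * (r - 1) \<le> (1 + (r - 1)) ^ (2 ^ n)"
      by (rule Bernoulli_inequality) (use r1 in simp)
    also have "\<dots> = x ^ (2 ^ n) / y ^ (2 ^ n)" by (simp add: r_def power_divide)
    also have "\<dots> \<le> 2" using bound[of n] \<open>0 \<le> y\<close> False by (simp add: divide_le_eq)
    finally have "real (2 ^ n) * (r - 1) \<le> 1" by simp
    moreover have "real n * (r - 1) \<le> real (2 ^ n) * (r - 1)"
      using r1 less_exp[of n] by (intro mult_right_mono) auto
    ultimately show False using n by simp
  qed
qed

text \<open>The powers \<open>(A + B) ^ 2 ^ k = A ^ 2 ^ k + B ^ 2 ^ k\<close> separate, and for self-adjoint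
  elements the C*-identity gives \<open>norm (h ^ 2 ^ k) = norm h ^ 2 ^ k\<close>.\<close>

lemma norm_add_orthogonal_selfadjoint_le:
  fixes A B :: "'b::cstar_algebra"
  assumes sa: "cstar A = A" "cstar B = B" and AB: "A * B = 0"
  shows "norm (A + B) \<le> max (norm A) (norm B)"
proof (rule le_if_power_le_2_mult_power)
  fix k
  define M where "M = max (norm A) (norm B)"
  have BA: "B * A = 0" using arg_cong[OF AB, of cstar] sa by (simp add: cstar_mult)
  obtain q where q: "2 ^ k = Suc q" using not0_implies_Suc[of "2 ^ k"] by auto
  have "norm (A + B) ^ (2 ^ k) = norm ((A + B) ^ (2 ^ k))"
    using norm_power_two_power_selfadjoint[of "A + B"] sa by (simp add: cstar_add)
  also have "\<dots> \<le> norm (A ^ (2 ^ k)) + norm (B ^ (2 ^ k))"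
    unfolding q power_Suc_add_orthogonal[OF AB BA] by (rule norm_triangle_ineq)
  also have "\<dots> = norm A ^ (2 ^ k) + norm B ^ (2 ^ k)"
    using norm_power_two_power_selfadjoint[OF sa(1)] norm_power_two_power_selfadjoint[OF sa(2)]
    by simp
  also have "\<dots> \<le> 2 * M ^ (2 ^ k)"
    using power_mono[of "norm A" M "2 ^ k"] power_mono[of "norm B" M "2 ^ k"] by (simp add: M_def)
  finally show "norm (A + B) ^ (2 ^ k) \<le> 2 * max (norm A) (norm B) ^ (2 ^ k)"
    by (simp add: M_def)
qed (simp add: le_max_iff_disj)

lemma norm_one_minus_compression_le_1:
  fixes P Q :: "'b::cstar_algebra"
  assumes P: "projection P" and Q: "projection Q"
  shows "norm (1 - P * Q * P) \<le> 1"
proof -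
  have Ps: "cstar P = P" "P * P = P" and Qs: "cstar Q = Q"
    using P Q by (auto simp: projection_def)
  have "(1 - P) * (P * (1 - Q) * P) = ((1 - P) * P) * ((1 - Q) * P)"
    by (simp only: mult.assoc)
  then have orth: "(1 - P) * (P * (1 - Q) * P) = 0" using Ps by (simp add: algebra_simps)
  have "norm (P * (1 - Q) * P) \<le> norm P * norm (1 - Q) * norm P"
    by (metis norm_mult_ineq mult_right_mono norm_ge_zero order_trans)
  also have "\<dots> \<le> 1"
    using projection_norm_le_1[OF P] projection_norm_le_1[OF projection_one_minus[OF Q]]
    by (simp add: mult_le_one)
  finally have "norm (P * (1 - Q) * P) \<le> 1" .
  moreover have "norm (1 - P) \<le> 1" by (rule projection_norm_le_1[OF projection_one_minus[OF P]])
  moreover have "norm (1 - P * Q * P) \<le> max (norm (1 - P)) (norm (P * (1 - Q) * P))"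
  proof -
    have "1 - P * Q * P = (1 - P) + P * (1 - Q) * P"
      using Ps by (simp add: algebra_simps)
    moreover have "cstar (P * (1 - Q) * P) = P * (1 - Q) * P"
      using Ps Qs by (simp add: cstar_mult mult.assoc)
    ultimately show ?thesis
      using norm_add_orthogonal_selfadjoint_le[OF _ _ orth] Ps by (simp only:) simp
  qed
  ultimately show ?thesis by simp
qed

lemma norm_one_minus_scaleR_le_1:
  fixes a :: "'b::cstar_algebra"
  assumes a: "norm (1 - a) \<le> 1" and t: "0 \<le> t" "t \<le> 1"
  shows "norm (1 - t *\<^sub>R a) \<le> 1"
proof -
  have "norm (1 - t *\<^sub>R a) = norm ((1 - t) *\<^sub>R 1 + t *\<^sub>R (1 - a))"
    by (simp add: algebra_simps)
  also have "\<dots> \<le> norm ((1 - t) *\<^sub>R (1::'b)) + norm (t *\<^sub>R (1 - a))"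
    by (rule norm_triangle_ineq)
  also have "\<dots> \<le> (1 - t) + t"
    using t mult_left_mono[OF a t(1)] by simp
  finally show ?thesis by simp
qed

lemma norm_one_plus_scaleR_le_1:
  fixes b :: "'b::cstar_algebra"
  assumes m: "norm (1 - b) \<le> 1" and p: "norm (1 + b) \<le> 1" and s: "\<bar>s\<bar> \<le> 1"
  shows "norm (1 + s *\<^sub>R b) \<le> 1"
proof (cases "s \<ge> 0")
  case True
  then show ?thesis using norm_one_minus_scaleR_le_1[of "- b" s] p s by simp
next
  case False
  then show ?thesis using norm_one_minus_scaleR_le_1[OF m, of "- s"] s by simp
qed

text \<open>Moving off the real axis increases the norm only to second order: by the C*-identity,
  \<open>(1 + w b)\<^sup>* (1 + w b) = (1 + Re w b)\<^sup>2 + (Im w)\<^sup>2 b\<^sup>2\<close>.\<close>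

lemma norm_one_plus_scaleC_squared_le:
  fixes b :: "'b::cstar_algebra"
  assumes sa: "cstar b = b" and m: "norm (1 - b) \<le> 1" and p: "norm (1 + b) \<le> 1"
    and re: "\<bar>Re w\<bar> \<le> 1"
  shows "norm (1 + scaleC w b) ^ 2 \<le> 1 + (Im w) ^ 2 * norm b ^ 2"
proof -
  define a where "a = Re w"
  define c where "c = Im w"
  define x where "x = 1 + scaleC w b"
  have "cstar x * x = 1 + (scaleC w b + scaleC (cnj w) b) + scaleC (cnj w) b * scaleC w b"
    by (simp add: x_def cstar_add cstar_scaleC sa algebra_simps)
  also have "scaleC w b + scaleC (cnj w) b = (2 * a) *\<^sub>R b"
    by (simp only: scaleC_add_left[symmetric] complex_add_cnj scaleC_of_real a_def)
  also have "scaleC (cnj w) b * scaleC w b = (a ^ 2 + c ^ 2) *\<^sub>R (b * b)"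
    by (simp only: mult_scaleC_left mult_scaleC_right scaleC_scaleC mult.commute[of w]
        complex_mult_cnj scaleC_of_real a_def c_def)
  finally have eq0: "cstar x * x = 1 + (2 * a) *\<^sub>R b + (a ^ 2 + c ^ 2) *\<^sub>R (b * b)"
    by (simp add: algebra_simps)
  have t: "(2 * a) *\<^sub>R b = a *\<^sub>R b + a *\<^sub>R b" by (metis mult_2 scaleR_add_left)
  have "cstar x * x = (1 + a *\<^sub>R b) * (1 + a *\<^sub>R b) + (c ^ 2) *\<^sub>R (b * b)"
    unfolding eq0 t by (simp add: algebra_simps power2_eq_square scaleR_add_left)
  then have "norm x * norm x \<le> norm (1 + a *\<^sub>R b) * norm (1 + a *\<^sub>R b) + c ^ 2 * (norm b * norm b)"
    using cstar_identity[of x] norm_mult_ineq[of b b] norm_mult_ineq[of "1 + a *\<^sub>R b" "1 + a *\<^sub>R b"]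
      norm_triangle_ineq[of "(1 + a *\<^sub>R b) * (1 + a *\<^sub>R b)" "(c ^ 2) *\<^sub>R (b * b)"]
      mult_left_mono[of "norm (b * b)" "norm b * norm b" "c ^ 2"]
    by simp
  also have "\<dots> \<le> 1 * 1 + c ^ 2 * (norm b * norm b)"
    using norm_one_plus_scaleR_le_1[OF m p] re by (intro add_right_mono mult_mono) (auto simp: a_def)
  finally show ?thesis by (simp add: x_def c_def power2_eq_square)
qed

lemma one_plus_inverse_power_le_3: "(1 + 1 / real n) ^ n \<le> 3"
proof -
  have "(1 + 1 / real n) ^ n \<le> exp (1 / real n) ^ n"
    by (intro power_mono) (auto simp: exp_ge_add_one_self add_nonneg_nonneg)
  also have "\<dots> \<le> exp 1"
  proof (cases "n = 0")
    case False
    have "exp (1 / real n) ^ n = exp (real n * (1 / real n))" by (rule exp_of_nat_mult[symmetric])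
    then show ?thesis using False by simp
  qed simp
  also have "\<dots> \<le> 1 + 1 + 1 ^ 2" by (rule exp_bound) auto
  finally show ?thesis by simp
qed

lemma norm_power_one_plus_scaleC_le_2:
  fixes b :: "'b::cstar_algebra"
  assumes sa: "cstar b = b" and m: "norm (1 - b) \<le> 1" and p: "norm (1 + b) \<le> 1"
    and n: "9 \<le> n" and z: "cmod z \<le> real n" "cmod z * norm b \<le> 3"
  shows "norm ((1 + scaleC (z / of_nat n) b) ^ n) \<le> 2"
proof -
  define w where "w = z / of_nat n"
  have np: "0 < real n" using n by simp
  have cw: "cmod w = cmod z / real n" by (simp add: w_def norm_divide)
  have "cmod w \<le> 1" using z(1) np by (simp add: cw)
  then have re: "\<bar>Re w\<bar> \<le> 1" using abs_Re_le_cmod[of w] by linarith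
  have "(Im w) ^ 2 \<le> (cmod w) ^ 2"
    using abs_Im_le_cmod[of w] by (metis abs_ge_zero power2_abs power_mono)
  then have "(Im w) ^ 2 * norm b ^ 2 \<le> (cmod w * norm b) ^ 2"
    by (simp add: power_mult_distrib mult_right_mono)
  also have "\<dots> \<le> (3 / real n) ^ 2"
  proof (rule power_mono)
    show "cmod w * norm b \<le> 3 / real n"
      using z(2) np by (simp add: cw divide_right_mono)
  qed simp
  also have "\<dots> = (9 / real n) * (1 / real n)" by (simp add: power2_eq_square)
  also have "\<dots> \<le> 1 / real n"
    using mult_right_mono[of "9 / real n" 1 "1 / real n"] n by simp
  finally have "(Im w) ^ 2 * norm b ^ 2 \<le> 1 / real n" .
  then have "norm (1 + scaleC w b) ^ 2 \<le> 1 + 1 / real n"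
    using norm_one_plus_scaleC_squared_le[OF sa m p re] by linarith
  then have "(norm (1 + scaleC w b) ^ 2) ^ n \<le> (1 + 1 / real n) ^ n"
    by (rule power_mono) simp
  then have "(norm (1 + scaleC w b) ^ 2) ^ n \<le> 3"
    using one_plus_inverse_power_le_3[of n] by linarith
  moreover have "norm ((1 + scaleC w b) ^ n) ^ 2 \<le> (norm (1 + scaleC w b) ^ n) ^ 2"
    by (rule power_mono[OF norm_power_ineq]) simp
  moreover have "(norm (1 + scaleC w b) ^ n) ^ 2 = (norm (1 + scaleC w b) ^ 2) ^ n"
    by (metis power_mult mult.commute)
  moreover have "(3::real) \<le> 2 ^ 2" by simp
  ultimately have "norm ((1 + scaleC w b) ^ n) ^ 2 \<le> 2 ^ 2" by linarith
  then show ?thesis unfolding w_def by (rule power2_le_imp_le) simp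
qed

lemma one_plus_scaleC_power:
  fixes y :: "'b::cstar_algebra"
  shows "(1 + scaleC z y) ^ n = (\<Sum>m\<le>n. scaleC (z ^ m) (of_nat (n choose m) * y ^ m))"
proof (induction n)
  case (Suc n)
  define f where "f m = scaleC (z ^ m) (of_nat (n choose m) * y ^ m)" for m
  define g where "g m = (if m = 0 then 0 else scaleC (z ^ m) (of_nat (n choose (m - 1)) * y ^ m))" for m
  have shift: "scaleC z y * f m = scaleC (z ^ Suc m) (of_nat (n choose m) * y ^ Suc m)" for m
  proof -
    have "y * (of_nat (n choose m) * y ^ m) = of_nat (n choose m) * y ^ Suc m"
      by (metis mult.assoc mult_of_nat_commute power_Suc)
    then show ?thesis
      by (simp add: f_def mult_scaleC_left mult_scaleC_right scaleC_scaleC mult.commute)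
  qed
  have "(1 + scaleC z y) ^ Suc n = (\<Sum>m\<le>n. f m) + (\<Sum>m\<le>n. scaleC z y * f m)"
    by (simp add: Suc f_def distrib_right sum_distrib_left sum.distrib)
  also have "(\<Sum>m\<le>n. f m) = (\<Sum>m\<le>Suc n. f m)"
    by (simp add: f_def binomial_eq_0)
  also have "(\<Sum>m\<le>n. scaleC z y * f m) = (\<Sum>m\<le>Suc n. g m)"
    by (simp add: shift g_def sum.atMost_Suc_shift del: sum.atMost_Suc)
  also have "(\<Sum>m\<le>Suc n. f m) + (\<Sum>m\<le>Suc n. g m) = (\<Sum>m\<le>Suc n. f m + g m)"
    by (rule sum.distrib[symmetric])
  also have "\<dots> = (\<Sum>m\<le>Suc n. scaleC (z ^ m) (of_nat (Suc n choose m) * y ^ m))"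
  proof (intro sum.cong refl)
    fix m
    show "f m + g m = scaleC (z ^ m) (of_nat (Suc n choose m) * y ^ m)"
      by (cases m) (simp_all add: f_def g_def distrib_right add.commute flip: scaleC_add_right)
  qed
  finally show ?case .
qed (simp add: scaleC_one)

lemma sum_powers_cis:
  fixes N j :: nat
  assumes N: "N > 0"
  shows "(\<Sum>k<N. (cis (2 * pi / real N) ^ j) ^ k) = (if N dvd j then of_nat N else 0)"
proof -
  define q where "q = cis (2 * pi * real j / real N)"
  have q: "cis (2 * pi / real N) ^ j = q"
    unfolding q_def Complex.DeMoivre by (rule arg_cong[where f = cis]) (simp add: field_simps)
  show ?thesis
  proof (cases "N dvd j")
    case True
    then obtain t where "j = N * t" by (auto simp: dvd_def)
    then have "2 * pi * real j / real N = 2 * pi * real t" using N by simp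
    then have "q = 1" unfolding q_def by simp
    then show ?thesis using True q by simp
  next
    case False
    have "q \<noteq> 1"
    proof
      assume "q = 1"
      then obtain t :: int where "2 * pi * real j / real N = t * 2 * pi"
        by (auto simp: q_def complex_eq_iff cos_one_2pi_int)
      then have "real_of_int (int j) = real_of_int (int N * t)" using N by (simp add: field_simps)
      then have "int N dvd int j" unfolding of_int_eq_iff by simp
      then show False using False by simp
    qed
    moreover have "q ^ N = 1"
    proof -
      have "q ^ N = cis (2 * pi * real j)" using N by (simp add: q_def Complex.DeMoivre)
      also have "\<dots> = 1" by (rule cis_multiple_2pi) simp
      finally show ?thesis .
    qed
    ultimately show ?thesis using False q by (simp add: sum_gp_strict)
  qed
qed

lemma roots_of_unity_filter_coeff_1:
  fixes n m :: nat and R :: real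
  assumes n: "1 \<le> n" and m: "m \<le> n"
  defines "\<omega> \<equiv> cis (2 * pi / real (Suc n))"
  shows "(\<Sum>k<Suc n. \<omega> ^ (k * n) * (of_real R * \<omega> ^ k) ^ m)
    = (if m = 1 then of_real (R * real (Suc n)) else 0)"
proof -
  have dvd: "Suc n dvd n + m \<longleftrightarrow> m = 1"
  proof
    assume "Suc n dvd n + m"
    then obtain t where t: "n + m = Suc n * t" by (auto simp: dvd_def)
    have "t < 2"
    proof (rule ccontr)
      assume "\<not> t < 2"
      then have "Suc n * 2 \<le> Suc n * t" by (intro mult_le_mono2) simp
      then show False using t m by simp
    qed
    moreover have "t \<noteq> 0" using t n by (cases t) auto
    ultimately have "t = 1" by simp
    then show "m = 1" using t by simp
  qed simp
  have "\<omega> ^ (k * n) * (of_real R * \<omega> ^ k) ^ m = of_real R ^ m * (\<omega> ^ (n + m)) ^ k" for k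
    by (simp add: power_mult_distrib power_add mult_ac flip: power_mult)
  then have "(\<Sum>k<Suc n. \<omega> ^ (k * n) * (of_real R * \<omega> ^ k) ^ m)
      = of_real R ^ m * (\<Sum>k<Suc n. (\<omega> ^ (n + m)) ^ k)"
    by (simp add: sum_distrib_left del: sum.lessThan_Suc)
  also have "\<dots> = of_real R ^ m * (if Suc n dvd (n + m) then of_nat (Suc n) else 0)"
    unfolding \<omega>_def by (subst sum_powers_cis) simp_all
  finally show ?thesis using dvd by simp
qed

lemma cauchy_estimate_coeff_1:
  fixes c :: "nat \<Rightarrow> 'b::cstar_algebra"
  assumes n: "1 \<le> n" and R: "0 \<le> R"
    and bound: "\<And>z. cmod z = R \<Longrightarrow> norm (\<Sum>m\<le>n. scaleC (z ^ m) (c m)) \<le> M"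
  shows "R * norm (c 1) \<le> M"
proof -
  define N where "N = Suc n"
  define \<omega> where "\<omega> = cis (2 * pi / real N)"
  define p where "p z = (\<Sum>m\<le>n. scaleC (z ^ m) (c m))" for z
  have "(\<Sum>k<N. scaleC (\<omega> ^ (k * n)) (p (of_real R * \<omega> ^ k))) = scaleC (of_real (R * real N)) (c 1)"
  proof -
    have "(\<Sum>k<N. scaleC (\<omega> ^ (k * n)) (p (of_real R * \<omega> ^ k)))
        = (\<Sum>m\<le>n. scaleC (\<Sum>k<N. \<omega> ^ (k * n) * (of_real R * \<omega> ^ k) ^ m) (c m))"
      unfolding p_def scaleC_sum_right scaleC_sum_left scaleC_scaleC by (rule sum.swap)
    also have "\<dots> = (\<Sum>m\<le>n. if m = 1 then scaleC (of_real (R * real N)) (c m) else 0)"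
      using roots_of_unity_filter_coeff_1[OF n] by (intro sum.cong refl) (simp add: \<omega>_def N_def)
    also have "\<dots> = scaleC (of_real (R * real N)) (c 1)"
      using n by (simp add: sum.delta)
    finally show ?thesis .
  qed
  then have "R * real N * norm (c 1) \<le> (\<Sum>k<N. norm (p (of_real R * \<omega> ^ k)))"
    using norm_sum[of "\<lambda>k. scaleC (\<omega> ^ (k * n)) (p (of_real R * \<omega> ^ k))" "{..<N}"] R
    by (simp add: norm_scaleC \<omega>_def norm_power norm_mult)
  also have "\<dots> \<le> real N * M"
    using sum_mono[of "{..<N}" "\<lambda>k. norm (p (of_real R * \<omega> ^ k))" "\<lambda>_. M"] bound R
    by (simp add: p_def norm_mult norm_power \<omega>_def)
  finally show ?thesis by (simp add: N_def)
qed

lemma selfadjoint_eq_0_if_norm_one_plus_minus_le_1: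
  fixes b :: "'b::cstar_algebra"
  assumes sa: "cstar b = b" and m: "norm (1 - b) \<le> 1" and p: "norm (1 + b) \<le> 1"
  shows "b = 0"
proof (rule ccontr)
  assume "b \<noteq> 0"
  define R where "R = 3 / norm b"
  have R: "R > 0" "R * norm b = 3" using \<open>b \<noteq> 0\<close> by (simp_all add: R_def)
  define n where "n = nat \<lceil>R\<rceil> + 9"
  have n: "9 \<le> n" "R \<le> real n" by (simp_all add: n_def) linarith
  define c where "c m = scaleC (1 / of_nat n ^ m) (of_nat (n choose m) * b ^ m)" for m
  have "R * norm (c 1) \<le> 2"
  proof (rule cauchy_estimate_coeff_1)
    fix z :: complex assume z: "cmod z = R"
    have "(\<Sum>m\<le>n. scaleC (z ^ m) (c m)) = (1 + scaleC (z / of_nat n) b) ^ n"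
      by (simp add: c_def one_plus_scaleC_power scaleC_scaleC power_divide)
    then show "norm (\<Sum>m\<le>n. scaleC (z ^ m) (c m)) \<le> 2"
      using norm_power_one_plus_scaleC_le_2[OF sa m p n(1)] z n R by simp
  qed (use n R in auto)
  moreover have "c 1 = b"
  proof -
    have "of_nat n * b = scaleC (of_nat n) b"
      by (metis of_real_of_nat_eq scaleC_of_real scaleR_conv_of_real)
    then show ?thesis using n by (simp add: c_def scaleC_scaleC scaleC_one)
  qed
  ultimately show False using R by simp
qed

lemma selfadjoint_eq_0_if_sum_eq_0:
  fixes a :: "'i \<Rightarrow> 'b::cstar_algebra"
  assumes fin: "finite I" and sa: "\<And>k. k \<in> I \<Longrightarrow> cstar (a k) = a k"
    and contr: "\<And>k. k \<in> I \<Longrightarrow> norm (1 - a k) \<le> 1"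
    and sum0: "sum a I = 0" and j: "j \<in> I"
  shows "a j = 0"
proof -
  define T where "T = I - {j}"
  have aj: "a j = - (\<Sum>k\<in>T. a k)"
    using sum0 sum.remove[OF fin j, of a] by (simp add: T_def eq_neg_iff_add_eq_0)
  show ?thesis
  proof (cases "T = {}")
    case False
    define n where "n = card T"
    have n: "real n > 0" using False fin by (simp add: n_def T_def card_gt_0_iff)
    define b where "b = (1 / real n) *\<^sub>R a j"
    have "norm (1 - b) \<le> 1"
      unfolding b_def using n by (intro norm_one_minus_scaleR_le_1 contr j) simp_all
    moreover have "norm (1 + b) \<le> 1"
    proof -
      have "(\<Sum>k\<in>T. 1 - a k) = real n *\<^sub>R 1 - (\<Sum>k\<in>T. a k)"
        by (simp add: sum_subtractf n_def scaleR_conv_of_real)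
      then have "1 + b = (1 / real n) *\<^sub>R (\<Sum>k\<in>T. 1 - a k)"
        using n by (simp add: b_def aj scaleR_diff_right)
      then have "norm (1 + b) \<le> (1 / real n) * (\<Sum>k\<in>T. norm (1 - a k))"
        using norm_sum[of "\<lambda>k. 1 - a k" T] n by (simp add: divide_right_mono)
      also have "\<dots> \<le> (1 / real n) * real n"
        using sum_mono[of T "\<lambda>k. norm (1 - a k)" "\<lambda>_. 1"] contr n by (simp add: T_def n_def)
      finally show ?thesis using n by simp
    qed
    moreover have "cstar b = b" using sa[OF j] by (simp add: b_def)
    ultimately have "b = 0" using selfadjoint_eq_0_if_norm_one_plus_minus_le_1 by blast
    then show ?thesis using n by (simp add: b_def)
  qed (simp add: aj)
qed

text \<open>The compressions \<open>P\<^sub>i P\<^sub>k P\<^sub>i\<close> (\<open>k \<noteq> i\<close>) are positive contractions with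
  sum \<open>P\<^sub>i (1 - P\<^sub>i) P\<^sub>i = 0\<close>, so each vanishes, and \<open>\<parallel>P\<^sub>j P\<^sub>i\<parallel>\<^sup>2 = \<parallel>P\<^sub>i P\<^sub>j P\<^sub>i\<parallel>\<close>.\<close>

lemma projections_sum_one_orthogonal:
  fixes f :: "'i \<Rightarrow> 'b::cstar_algebra"
  assumes fin: "finite I" and proj: "\<And>k. k \<in> I \<Longrightarrow> projection (f k)"
    and sum1: "sum f I = 1" and i: "i \<in> I" and j: "j \<in> I" and "i \<noteq> j"
  shows "f i * f j = 0"
proof -
  define P where "P = f i"
  define a where "a k = P * f k * P" for k
  have P: "cstar P = P" "P * P = P" using proj[OF i] by (auto simp: P_def projection_def)
  have fj: "cstar (f j) = f j" "f j * f j = f j" using proj[OF j] by (auto simp: projection_def)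
  have "(\<Sum>k\<in>I - {i}. a k) = P * (\<Sum>k\<in>I - {i}. f k) * P"
    by (simp add: a_def sum_distrib_left sum_distrib_right)
  also have "(\<Sum>k\<in>I - {i}. f k) = 1 - P"
    using sum1 sum.remove[OF fin i, of f] by (simp add: P_def algebra_simps)
  finally have "(\<Sum>k\<in>I - {i}. a k) = 0" using P by (simp add: algebra_simps)
  then have "a j = 0"
  proof (rule selfadjoint_eq_0_if_sum_eq_0[rotated 3])
    fix k assume "k \<in> I - {i}"
    then show "cstar (a k) = a k" "norm (1 - a k) \<le> 1"
      using proj P norm_one_minus_compression_le_1[OF proj[OF i]]
      by (auto simp: a_def P_def cstar_mult projection_def mult.assoc)
  qed (use fin j \<open>i \<noteq> j\<close> in auto)
  moreover have "norm (f j * P) * norm (f j * P) = norm (a j)"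
  proof -
    have "cstar (f j * P) * (f j * P) = P * (f j * f j) * P"
      using P fj(1) by (simp add: cstar_mult mult.assoc)
    then show ?thesis by (metis fj(2) a_def cstar_identity)
  qed
  ultimately have "cstar (f j * P) = 0" by simp
  then show ?thesis using P fj by (simp add: cstar_mult P_def)
qed

section \<open>Single-vertex k-graphs\<close>

lemma le_fun_eq_add_diff: "(M :: 'a \<Rightarrow> nat) \<le> N \<Longrightarrow> N = M + (N - M)"
  by (simp add: fun_eq_iff le_fun_def)

locale kgraph =
  fixes K :: "nat set" and d :: "'p::monoid_mult \<Rightarrow> nat \<Rightarrow> nat"
  assumes kgraph: "single_vertex_kgraph K d"
begin

lemma d_1 [simp]: "d 1 = 0"
  using kgraph by (simp add: single_vertex_kgraph_def zero_fun_def)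

lemma d_mult: "d (a * b) = d a + d b"
  using kgraph by (simp add: single_vertex_kgraph_def plus_fun_def)

lemma edges_finite_nonempty:
  "i \<in> K \<Longrightarrow> finite {\<mu>. d \<mu> = ebasis i} \<and> {\<mu>. d \<mu> = ebasis i} \<noteq> {}"
  using kgraph by (simp add: single_vertex_kgraph_def)

lemma unique_factorization:
  "d \<mu> = m + n \<Longrightarrow> \<exists>!ab. d (fst ab) = m \<and> d (snd ab) = n \<and> \<mu> = fst ab * snd ab"
  using kgraph unfolding single_vertex_kgraph_def plus_fun_def by blast

lemma factorization:
  assumes "d \<mu> = m + n" shows "\<exists>a b. d a = m \<and> d b = n \<and> \<mu> = a * b"
  using unique_factorization[OF assms] by auto

lemma factorization_unique:
  assumes da: "d a = d a'" and eq: "a * b = a' * b'"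
  shows "a = a' \<and> b = b'"
proof -
  have "d a + d b = d a' + d b'" using eq by (simp flip: d_mult)
  then have "d b = d b'" using da by (simp add: fun_eq_iff)
  with unique_factorization[OF d_mult[of a b]] show ?thesis
    using da eq by (metis fst_conv snd_conv)
qed

lemma d_eq_0_imp_eq_1: "d x = 0 \<Longrightarrow> x = 1"
  using factorization_unique[of x 1 1 x] by simp

lemma left_cancel: "a * b = a * c \<Longrightarrow> b = (c :: 'p)"
  using factorization_unique[of a a b c] by simp

lemma prefix_if_common_extension:
  assumes le: "d l \<le> d r" and eq: "r * \<alpha> = l * c"
  shows "\<exists>x. r = l * x"
proof -
  obtain r1 r2 where r: "d r1 = d l" "r = r1 * r2"
    using factorization[OF le_fun_eq_add_diff[OF le]] by blast
  have "r1 * (r2 * \<alpha>) = l * c" using eq r by (simp add: mult.assoc)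
  then show ?thesis using factorization_unique r by blast
qed

lemma zero_in_range_d: "0 \<in> range d"
  using d_1 by (metis rangeI)

lemma add_in_range_d: "N \<in> range d \<Longrightarrow> M \<in> range d \<Longrightarrow> N + M \<in> range d"
  by (auto simp flip: d_mult)

lemma le_in_range_d:
  assumes "M \<le> N" and "N \<in> range d"
  shows "M \<in> range d"
proof -
  obtain \<mu> where "d \<mu> = M + (N - M)" using assms le_fun_eq_add_diff by auto
  then obtain a b where "d a = M" using factorization by blast
  then show ?thesis by auto
qed

lemma sup_in_range_d: "N \<in> range d \<Longrightarrow> M \<in> range d \<Longrightarrow> sup N M \<in> range d"
proof -
  assume N: "N \<in> range d" and M: "M \<in> range d"
  have "sup N M = N + (M - N)" by (auto simp: fun_eq_iff sup_nat_def)
  moreover have "M - N \<in> range d" by (rule le_in_range_d[OF _ M]) (simp add: le_fun_def)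
  ultimately show ?thesis using add_in_range_d[OF N] by simp
qed

lemma range_d_support:
  assumes "N \<in> range d"
  shows "finite {i. N i \<noteq> 0}" and "N i \<noteq> 0 \<Longrightarrow> i \<in> K"
  using assms kgraph by (auto simp: single_vertex_kgraph_def)

lemma range_d_induct_coordinate:
  assumes N: "N \<in> range d" and base: "Q (N(i := 0))"
    and step: "\<And>N i. N \<in> range d \<Longrightarrow> Q N \<Longrightarrow> i \<in> K \<Longrightarrow> Q (N + ebasis i)"
  shows "Q N"
proof -
  have "Q (N(i := c))" if "c \<le> N i" for c
    using that
  proof (induction c)
    case (Suc c)
    have "N(i := c) \<le> N" using Suc.prems by (simp add: le_fun_def)
    then have "N(i := c) \<in> range d" using N by (rule le_in_range_d)
    moreover have "i \<in> K" using range_d_support(2)[OF N, of i] Suc.prems by simp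
    moreover have "Q (N(i := c))" by (rule Suc.IH) (use Suc.prems in simp)
    moreover have "N(i := Suc c) = N(i := c) + ebasis i" by (simp add: fun_eq_iff ebasis_def)
    ultimately show ?case using step by metis
  qed (use base in simp)
  then show ?thesis by (metis fun_upd_triv order_refl)
qed

lemma range_d_induct [consumes 1, case_names zero step]:
  assumes N: "N \<in> range d" and zero: "Q 0"
    and step: "\<And>N i. N \<in> range d \<Longrightarrow> Q N \<Longrightarrow> i \<in> K \<Longrightarrow> Q (N + ebasis i)"
  shows "Q N"
proof -
  have "Q N" if "N \<in> range d" "\<forall>j\<ge>B. N j = 0" for N B
    using that
  proof (induction B arbitrary: N)
    case (0 N)
    then have "N = 0" by (simp add: fun_eq_iff)
    then show ?case using zero by (simp only:)
  next
    case (Suc B N)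
    have "N(B := 0) \<in> range d" by (rule le_in_range_d[OF _ Suc.prems(1)]) (simp add: le_fun_def)
    moreover have "\<forall>j\<ge>B. (N(B := 0)) j = 0" using Suc.prems(2) by (auto simp: Suc_le_eq)
    ultimately have "Q (N(B := 0))" by (rule Suc.IH)
    then show ?case using range_d_induct_coordinate[OF Suc.prems(1), of Q B] step by blast
  qed
  moreover obtain B where "\<forall>j\<in>{i. N i \<noteq> 0}. j < B"
    using range_d_support(1)[OF N] finite_nat_set_iff_bounded by blast
  then have "\<forall>j\<ge>B. N j = 0" by (auto simp: not_less[symmetric])
  ultimately show ?thesis using N by blast
qed

definition of_degree :: "(nat \<Rightarrow> nat) \<Rightarrow> 'p set" where
  "of_degree N = {\<rho>. d \<rho> = N}"

lemma of_degree_0: "of_degree 0 = {1}"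
  using d_eq_0_imp_eq_1 unfolding of_degree_def by auto

lemma of_degree_add: "of_degree (N + M) = (\<lambda>(a, b). a * b) ` (of_degree N \<times> of_degree M)"
proof
  show "of_degree (N + M) \<subseteq> (\<lambda>(a, b). a * b) ` (of_degree N \<times> of_degree M)"
  proof
    fix x assume "x \<in> of_degree (N + M)"
    then have "d x = N + M" by (simp add: of_degree_def)
    then obtain a b where "d a = N" "d b = M" "x = a * b"
      using factorization by blast
    then show "x \<in> (\<lambda>(a, b). a * b) ` (of_degree N \<times> of_degree M)" by (auto simp: of_degree_def)
  qed
qed (auto simp: of_degree_def d_mult)

lemma inj_on_mult_of_degree: "inj_on (\<lambda>(a, b). a * b) (of_degree N \<times> of_degree M)"
proof (rule inj_onI)
  fix p q assume p: "p \<in> of_degree N \<times> of_degree M" and q: "q \<in> of_degree N \<times> of_degree M"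
    and eq: "(\<lambda>(a, b). a * b) p = (\<lambda>(a, b). a * b) q"
  obtain a b a' b' where ab: "p = (a, b)" "q = (a', b')" by fastforce
  have "d a = d a'" using p q ab by (simp add: of_degree_def)
  moreover have "a * b = a' * b'" using eq ab by simp
  ultimately show "p = q" using factorization_unique ab by blast
qed

lemma finite_of_degree: "finite (of_degree N)"
proof (cases "N \<in> range d")
  case True
  then show ?thesis
  proof (induction rule: range_d_induct)
    case (step N i)
    then have "finite (of_degree N \<times> of_degree (ebasis i))"
      using edges_finite_nonempty by (simp add: of_degree_def)
    then show ?case unfolding of_degree_add by (rule finite_imageI)
  qed (simp add: of_degree_0[unfolded zero_fun_def] zero_fun_def)
next
  case False
  then have "of_degree N = {}" by (auto simp: of_degree_def)
  then show ?thesis by simp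
qed

definition determined_at :: "'p set \<Rightarrow> (nat \<Rightarrow> nat) \<Rightarrow> bool" where
  "determined_at S N \<longleftrightarrow> N \<in> range d \<and> (\<forall>\<rho> \<alpha>. N \<le> d \<rho> \<longrightarrow> (\<rho> * \<alpha> \<in> S \<longleftrightarrow> \<rho> \<in> S))"

lemma determined_at_mono: "determined_at S N \<Longrightarrow> N \<le> M \<Longrightarrow> M \<in> range d \<Longrightarrow> determined_at S M"
  unfolding determined_at_def using order_trans by blast

lemma determined_at_Int: "determined_at S N \<Longrightarrow> determined_at T N \<Longrightarrow> determined_at (S \<inter> T) N"
  unfolding determined_at_def by blast

lemma determined_at_Union: "N \<in> range d \<Longrightarrow> (\<And>X. X \<in> F \<Longrightarrow> determined_at X N) \<Longrightarrow> determined_at (\<Union>F) N"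
  unfolding determined_at_def by blast

lemma determined_at_UNIV: "N \<in> range d \<Longrightarrow> determined_at UNIV N"
  unfolding determined_at_def by blast

lemma determined_at_empty: "N \<in> range d \<Longrightarrow> determined_at {} N"
  unfolding determined_at_def by blast

lemma determined_at_sup:
  assumes S: "determined_at S N" and T: "determined_at T M"
  shows "determined_at S (sup N M)" and "determined_at T (sup N M)"
proof -
  have r: "sup N M \<in> range d" using S T sup_in_range_d by (simp add: determined_at_def)
  show "determined_at S (sup N M)" "determined_at T (sup N M)"
    using determined_at_mono[OF S _ r] determined_at_mono[OF T _ r] by simp_all
qed

definition principal :: "'p \<Rightarrow> 'p set" where "principal l = {\<sigma>. \<exists>a. \<sigma> = l * a}"

lemma determined_at_principal: "determined_at (principal l) (d l)"
proof -
  have "\<rho> * \<alpha> \<in> principal l \<longleftrightarrow> \<rho> \<in> principal l" if "d l \<le> d \<rho>" for \<rho> \<alpha>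
    using prefix_if_common_extension[OF that] by (auto simp: principal_def mult.assoc)
  then show ?thesis by (simp add: determined_at_def)
qed

lemma determined_at_image_mult:
  assumes S: "determined_at S N"
  shows "determined_at ((*) \<nu> ` S) (d \<nu> + N)"
proof -
  have N: "N \<in> range d" using S by (simp add: determined_at_def)
  have r: "d \<nu> + N \<in> range d" by (rule add_in_range_d[OF _ N]) simp
  have "\<rho> * \<alpha> \<in> (*) \<nu> ` S \<longleftrightarrow> \<rho> \<in> (*) \<nu> ` S" if le: "d \<nu> + N \<le> d \<rho>" for \<rho> \<alpha>
  proof
    have "d \<nu> \<le> d \<nu> + N" by (simp add: le_fun_def)
    then have le1: "d \<nu> \<le> d \<rho>" using le by (rule order_trans)
    assume "\<rho> * \<alpha> \<in> (*) \<nu> ` S"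
    then obtain s where s: "s \<in> S" "\<rho> * \<alpha> = \<nu> * s" by auto
    obtain r where rr: "\<rho> = \<nu> * r" using prefix_if_common_extension[OF le1 s(2)] by auto
    have "d \<nu> + N \<le> d \<nu> + d r" using le rr by (simp add: d_mult)
    then have le3: "N \<le> d r" by (simp add: le_fun_def)
    have "r * \<alpha> = s" using s(2) rr left_cancel by (simp add: mult.assoc)
    moreover have "r * \<alpha> \<in> S \<longleftrightarrow> r \<in> S" using S le3 by (simp add: determined_at_def)
    ultimately have "r \<in> S" using s(1) by simp
    then show "\<rho> \<in> (*) \<nu> ` S" using rr by auto
  next
    assume "\<rho> \<in> (*) \<nu> ` S"
    then obtain r where rr: "r \<in> S" "\<rho> = \<nu> * r" by auto
    have "d \<nu> + N \<le> d \<nu> + d r" using le rr by (simp add: d_mult)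
    then have le3: "N \<le> d r" by (simp add: le_fun_def)
    have "r * \<alpha> \<in> S" using S le3 rr(1) by (simp add: determined_at_def)
    then show "\<rho> * \<alpha> \<in> (*) \<nu> ` S" using rr by (auto simp: mult.assoc)
  qed
  then show ?thesis using r by (simp add: determined_at_def)
qed

lemma preimage_mult_image_mult:
  assumes "d \<rho> = d \<nu>"
  shows "{\<alpha>. \<rho> * \<alpha> \<in> (*) \<nu> ` S} = (if \<rho> = \<nu> then S else {})"
proof (cases "\<rho> = \<nu>")
  case True
  then show ?thesis by (auto dest: left_cancel)
next
  case False
  then show ?thesis by (auto dest: factorization_unique[OF assms])
qed

definition fg_ideal :: "'p list \<Rightarrow> 'p set" where "fg_ideal xs = \<Union> (principal ` set xs)"

lemma d_le_d_prod_list: "l \<in> set xs \<Longrightarrow> d l \<le> d (prod_list xs)"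
proof (induction xs)
  case (Cons x xs)
  then show ?case by (auto simp: d_mult le_fun_def intro: add_increasing)
qed simp

lemma determined_at_fg_ideal: "determined_at (fg_ideal xs) (d (prod_list xs))"
  unfolding fg_ideal_def
proof (rule determined_at_Union)
  show "d (prod_list xs) \<in> range d" by simp
  fix X assume "X \<in> principal ` set xs"
  then obtain l where l: "l \<in> set xs" "X = principal l" by auto
  show "determined_at X (d (prod_list xs))"
    using determined_at_mono[OF determined_at_principal d_le_d_prod_list[OF l(1)]] l by simp
qed

lemma fg_ideal_Cons: "fg_ideal (x # xs) = principal x \<union> fg_ideal xs"
  by (simp add: fg_ideal_def)

lemma determined_at_common:
  assumes "\<forall>X\<in>set xs. \<exists>N. determined_at (f X) N"
  shows "\<exists>N. N \<in> range d \<and> (\<forall>X\<in>set xs. determined_at (f X) N)"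
  using assms
proof (induction xs)
  case Nil then show ?case using zero_in_range_d by auto
next
  case (Cons x xs)
  obtain N where N: "N \<in> range d" "\<forall>X\<in>set xs. determined_at (f X) N" using Cons by auto
  obtain M where M: "determined_at (f x) M" using Cons.prems by auto
  have r: "sup N M \<in> range d" using N(1) M sup_in_range_d by (simp add: determined_at_def)
  have "determined_at (f x) (sup N M)" by (rule determined_at_mono[OF M _ r]) simp
  moreover have "\<forall>X\<in>set xs. determined_at (f X) (sup N M)" using N(2) determined_at_mono r by (meson sup_ge1)
  ultimately show ?case using r by auto
qed

end

section \<open>Cuntz--Krieger families of a single-vertex k-graph\<close>

locale ck_family = kgraph K d for K :: "nat set" and d :: "'p::monoid_mult \<Rightarrow> nat \<Rightarrow> nat" +
  fixes W :: "'p \<Rightarrow> 'b::cstar_algebra"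
  assumes W_isometry: "\<And>\<mu>. isometry (W \<mu>)"
    and W_1: "W 1 = 1"
    and W_mult: "\<And>\<mu> \<nu>. W (\<mu> * \<nu>) = W \<mu> * W \<nu>"
    and W_ck: "\<And>i. i \<in> K \<Longrightarrow> (\<Sum>\<mu>\<in>{\<mu>. d \<mu> = ebasis i}. W \<mu> * cstar (W \<mu>)) = 1"
begin

definition range_proj :: "'p \<Rightarrow> 'b" where "range_proj \<rho> = W \<rho> * cstar (W \<rho>)"

lemma W_adj_W: "cstar (W \<mu>) * W \<mu> = 1"
  using W_isometry by (simp add: isometry_def)

lemma projection_range_proj: "projection (range_proj \<rho>)"
proof -
  have "range_proj \<rho> * range_proj \<rho> = W \<rho> * (cstar (W \<rho>) * W \<rho>) * cstar (W \<rho>)"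
    by (simp add: range_proj_def mult.assoc)
  also have "\<dots> = range_proj \<rho>" by (simp add: W_adj_W range_proj_def)
  finally show ?thesis by (simp add: projection_def range_proj_def cstar_mult cstar_cstar)
qed

lemma range_proj_selfadjoint: "cstar (range_proj \<rho>) = range_proj \<rho>"
  using projection_range_proj by (simp add: projection_def)

lemma range_proj_conj: "W \<rho> * range_proj \<alpha> * cstar (W \<rho>) = range_proj (\<rho> * \<alpha>)"
  by (simp add: range_proj_def W_mult cstar_mult mult.assoc)

definition level_proj :: "(nat \<Rightarrow> nat) \<Rightarrow> 'p set \<Rightarrow> 'b" where
  "level_proj N S = (\<Sum>\<rho>\<in>of_degree N \<inter> S. range_proj \<rho>)"

lemma level_proj_add:
  "level_proj (N + M) S = (\<Sum>\<rho>\<in>of_degree N. W \<rho> * level_proj M {\<alpha>. \<rho> * \<alpha> \<in> S} * cstar (W \<rho>))"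
proof -
  define A where "A = Sigma (of_degree N) (\<lambda>\<rho>. of_degree M \<inter> {\<alpha>. \<rho> * \<alpha> \<in> S})"
  have A_sub: "A \<subseteq> of_degree N \<times> of_degree M" by (auto simp: A_def)
  have img: "of_degree (N + M) \<inter> S = (\<lambda>(a, b). a * b) ` A"
    unfolding of_degree_add A_def by auto
  have inj: "inj_on (\<lambda>(a, b). a * b) A" by (rule inj_on_subset[OF inj_on_mult_of_degree A_sub])
  have "(\<Sum>\<sigma>\<in>of_degree (N + M) \<inter> S. range_proj \<sigma>) = (\<Sum>x\<in>A. range_proj ((\<lambda>(a, b). a * b) x))"
    unfolding img by (subst sum.reindex[OF inj]) (simp add: comp_def)
  also have "\<dots> = (\<Sum>\<rho>\<in>of_degree N. \<Sum>\<alpha>\<in>of_degree M \<inter> {\<alpha>. \<rho> * \<alpha> \<in> S}. range_proj (\<rho> * \<alpha>))"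
    unfolding A_def by (subst sum.Sigma) (auto simp: finite_of_degree prod.case_distrib)
  also have "\<dots> = (\<Sum>\<rho>\<in>of_degree N. W \<rho> * (\<Sum>\<alpha>\<in>of_degree M \<inter> {\<alpha>. \<rho> * \<alpha> \<in> S}. range_proj \<alpha>) * cstar (W \<rho>))"
    by (simp add: sum_distrib_left sum_distrib_right range_proj_conj)
  finally show ?thesis unfolding level_proj_def .
qed

lemma level_proj_UNIV: "N \<in> range d \<Longrightarrow> level_proj N UNIV = 1"
proof (induction rule: range_d_induct)
  case zero
  show ?case unfolding level_proj_def of_degree_0 by (simp add: range_proj_def W_1)
next
  case (step N i)
  have "level_proj (N + ebasis i) UNIV = (\<Sum>\<rho>\<in>of_degree N. W \<rho> * level_proj (ebasis i) UNIV * cstar (W \<rho>))"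
    by (simp add: level_proj_add)
  also have "\<dots> = (\<Sum>\<rho>\<in>of_degree N. range_proj \<rho>)"
    using W_ck[OF \<open>i \<in> K\<close>] by (simp add: level_proj_def of_degree_def range_proj_def)
  also have "\<dots> = 1" using step unfolding level_proj_def by simp
  finally show ?case .
qed

lemma range_proj_orthogonal:
  assumes "N \<in> range d" and "\<rho> \<in> of_degree N" and "\<sigma> \<in> of_degree N" and "\<rho> \<noteq> \<sigma>"
  shows "range_proj \<rho> * range_proj \<sigma> = 0"
proof -
  have "sum range_proj (of_degree N) = 1"
    using level_proj_UNIV[OF assms(1)] by (simp add: level_proj_def)
  then show ?thesis
    using projections_sum_one_orthogonal[OF finite_of_degree _ _ assms(2-4)] projection_range_proj
    by blast
qed

lemma range_proj_idem: "range_proj \<rho> * range_proj \<rho> = range_proj \<rho>"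
  using projection_range_proj by (simp add: projection_def)

lemma level_proj_Int:
  assumes N: "N \<in> range d"
  shows "level_proj N S * level_proj N T = level_proj N (S \<inter> T)"
proof -
  have "level_proj N S * level_proj N T = (\<Sum>\<rho>\<in>of_degree N \<inter> S. \<Sum>\<sigma>\<in>of_degree N \<inter> T. range_proj \<rho> * range_proj \<sigma>)"
    unfolding level_proj_def by (rule sum_product)
  also have "\<dots> = (\<Sum>\<rho>\<in>of_degree N \<inter> S. \<Sum>\<sigma>\<in>of_degree N \<inter> T. if \<rho> = \<sigma> then range_proj \<rho> else 0)"
    by (intro sum.cong refl) (auto simp: range_proj_orthogonal[OF N] range_proj_idem)
  also have "\<dots> = (\<Sum>\<rho>\<in>of_degree N \<inter> S. if \<rho> \<in> of_degree N \<inter> T then range_proj \<rho> else 0)"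
    by (intro sum.cong refl) (simp add: finite_of_degree)
  also have "\<dots> = level_proj N (S \<inter> T)"
  proof -
    have "(\<Sum>\<rho>\<in>of_degree N \<inter> S. if \<rho> \<in> of_degree N \<inter> T then range_proj \<rho> else 0)
        = sum range_proj ((of_degree N \<inter> S) \<inter> (of_degree N \<inter> T))"
      by (rule sum.inter_restrict[symmetric]) (simp add: finite_of_degree)
    also have "(of_degree N \<inter> S) \<inter> (of_degree N \<inter> T) = of_degree N \<inter> (S \<inter> T)" by blast
    finally show ?thesis unfolding level_proj_def .
  qed
  finally show ?thesis .
qed

lemma level_proj_selfadjoint: "cstar (level_proj N S) = level_proj N S"
  by (simp add: level_proj_def cstar_sum range_proj_selfadjoint)

lemma projection_level_proj: "N \<in> range d \<Longrightarrow> projection (level_proj N S)"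
  using level_proj_Int[of N S S] level_proj_selfadjoint by (simp add: projection_def)

lemma level_proj_Compl: "N \<in> range d \<Longrightarrow> level_proj N (- S) = 1 - level_proj N S"
proof -
  assume N: "N \<in> range d"
  have "level_proj N UNIV = level_proj N S + level_proj N (- S)"
  proof -
    have "of_degree N \<inter> UNIV = (of_degree N \<inter> S) \<union> (of_degree N \<inter> - S)" by auto
    then show ?thesis unfolding level_proj_def
      by (simp add: sum.union_disjoint[symmetric] finite_of_degree Int_Un_distrib[symmetric])
  qed
  then show ?thesis using level_proj_UNIV[OF N] by (simp add: algebra_simps)
qed

lemma level_proj_step:
  assumes S: "determined_at S N" and le: "N \<le> M" and M: "M \<in> range d" and i: "i \<in> K"
  shows "level_proj (M + ebasis i) S = level_proj M S"
proof -
  have "level_proj (M + ebasis i) S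
      = (\<Sum>\<rho>\<in>of_degree M. W \<rho> * level_proj (ebasis i) {\<alpha>. \<rho> * \<alpha> \<in> S} * cstar (W \<rho>))"
    by (rule level_proj_add)
  also have "\<dots> = (\<Sum>\<rho>\<in>of_degree M. if \<rho> \<in> S then range_proj \<rho> else 0)"
  proof (intro sum.cong refl)
    fix \<rho> assume "\<rho> \<in> of_degree M"
    then have "{\<alpha>. \<rho> * \<alpha> \<in> S} = (if \<rho> \<in> S then UNIV else {})"
      using S le unfolding determined_at_def of_degree_def by auto
    moreover have "level_proj (ebasis i) UNIV = 1"
      using W_ck[OF i] by (simp add: level_proj_def of_degree_def range_proj_def)
    ultimately show "W \<rho> * level_proj (ebasis i) {\<alpha>. \<rho> * \<alpha> \<in> S} * cstar (W \<rho>)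
        = (if \<rho> \<in> S then range_proj \<rho> else 0)"
      by (simp add: range_proj_def level_proj_def)
  qed
  also have "\<dots> = level_proj M S"
    unfolding level_proj_def by (simp add: sum.inter_restrict finite_of_degree)
  finally show ?thesis .
qed

lemma level_proj_eq:
  assumes S: "determined_at S N" and le: "N \<le> M" and M: "M \<in> range d"
  shows "level_proj M S = level_proj N S"
proof -
  have N: "N \<in> range d" using S by (simp add: determined_at_def)
  have "M - N \<in> range d" by (rule le_in_range_d[OF _ M]) (simp add: le_fun_def)
  then have "level_proj (N + (M - N)) S = level_proj N S"
  proof (induction rule: range_d_induct)
    case zero then show ?case by simp
  next
    case (step D i)
    have r: "N + D \<in> range d" by (rule add_in_range_d[OF N step(1)])
    have le2: "N \<le> N + D" by (simp add: le_fun_def)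
    have "level_proj (N + (D + ebasis i)) S = level_proj ((N + D) + ebasis i) S" by (simp only: add.assoc)
    also have "\<dots> = level_proj (N + D) S" by (rule level_proj_step[OF S le2 r \<open>i \<in> K\<close>])
    also have "\<dots> = level_proj N S" by (simp only: step)
    finally show ?case .
  qed
  moreover have "N + (M - N) = M" using le by (simp add: fun_eq_iff le_fun_def)
  ultimately show ?thesis by simp
qed

text \<open>By \<open>ideal_proj_eq\<close> the degree picked by SOME does not matter; on sets that are not
  determined at any degree the value is junk.\<close>

definition ideal_proj :: "'p set \<Rightarrow> 'b" where
  "ideal_proj S = level_proj (SOME N. determined_at S N) S"

lemma ideal_proj_eq:
  assumes S: "determined_at S N" shows "ideal_proj S = level_proj N S"
proof -
  define N0 where "N0 = (SOME N. determined_at S N)"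
  have S0: "determined_at S N0" unfolding N0_def using someI[where P="\<lambda>N. determined_at S N", OF S] .
  have r: "sup N0 N \<in> range d" using S S0 sup_in_range_d by (simp add: determined_at_def)
  have "level_proj (sup N0 N) S = level_proj N0 S" by (rule level_proj_eq[OF S0 _ r]) simp
  moreover have "level_proj (sup N0 N) S = level_proj N S" by (rule level_proj_eq[OF S _ r]) simp
  ultimately show ?thesis by (simp add: ideal_proj_def N0_def)
qed

lemma projection_ideal_proj: "determined_at S N \<Longrightarrow> projection (ideal_proj S)"
  using ideal_proj_eq projection_level_proj by (simp add: determined_at_def)

lemma ideal_proj_Int:
  assumes S: "determined_at S N" and T: "determined_at T M"
  shows "ideal_proj (S \<inter> T) = ideal_proj S * ideal_proj T"
proof -
  define L where "L = sup N M"
  have SL: "determined_at S L" and TL: "determined_at T L" using determined_at_sup[OF S T] by (auto simp: L_def)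
  have L: "L \<in> range d" using SL by (simp add: determined_at_def)
  show ?thesis using ideal_proj_eq[OF SL] ideal_proj_eq[OF TL] ideal_proj_eq[OF determined_at_Int[OF SL TL]] level_proj_Int[OF L]
    by simp
qed

lemma ideal_proj_Un:
  assumes S: "determined_at S N" and T: "determined_at T M"
  shows "1 - ideal_proj (S \<union> T) = (1 - ideal_proj S) * (1 - ideal_proj T)"
proof -
  define L where "L = sup N M"
  have SL: "determined_at S L" and TL: "determined_at T L" using determined_at_sup[OF S T] by (auto simp: L_def)
  have L: "L \<in> range d" using SL by (simp add: determined_at_def)
  have U: "determined_at (S \<union> T) L" using determined_at_Union[OF L, of "{S, T}"] SL TL by auto
  have "1 - ideal_proj (S \<union> T) = level_proj L (- (S \<union> T))" by (simp only: ideal_proj_eq[OF U] level_proj_Compl[OF L])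
  also have "\<dots> = level_proj L (- S) * level_proj L (- T)" using level_proj_Int[OF L] by (simp add: Compl_Un)
  also have "\<dots> = (1 - ideal_proj S) * (1 - ideal_proj T)"
    using ideal_proj_eq[OF SL] ideal_proj_eq[OF TL] level_proj_Compl[OF L] by simp
  finally show ?thesis .
qed

lemma ideal_proj_principal: "ideal_proj (principal l) = range_proj l"
proof -
  have "of_degree (d l) \<inter> principal l = {l}"
  proof
    show "of_degree (d l) \<inter> principal l \<subseteq> {l}"
    proof
      fix \<sigma> assume "\<sigma> \<in> of_degree (d l) \<inter> principal l"
      then obtain a where a: "\<sigma> = l * a" "d \<sigma> = d l" by (auto simp: of_degree_def principal_def)
      then have "d a = 0" by (simp add: d_mult fun_eq_iff)
      then have "a = 1" by (rule d_eq_0_imp_eq_1)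
      then show "\<sigma> \<in> {l}" using a by simp
    qed
    show "{l} \<subseteq> of_degree (d l) \<inter> principal l" by (auto simp: of_degree_def principal_def intro: exI[of _ 1])
  qed
  then show ?thesis using ideal_proj_eq[OF determined_at_principal] by (simp add: level_proj_def)
qed

lemma ideal_proj_image_mult:
  assumes S: "determined_at S N"
  shows "ideal_proj ((*) \<nu> ` S) = W \<nu> * ideal_proj S * cstar (W \<nu>)"
proof -
  have "ideal_proj ((*) \<nu> ` S) = level_proj (d \<nu> + N) ((*) \<nu> ` S)"
    by (rule ideal_proj_eq[OF determined_at_image_mult[OF S]])
  also have "\<dots> = (\<Sum>\<rho>\<in>of_degree (d \<nu>). if \<rho> = \<nu> then W \<nu> * level_proj N S * cstar (W \<nu>) else 0)"
    unfolding level_proj_add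
    by (intro sum.cong refl) (simp add: preimage_mult_image_mult of_degree_def level_proj_def)
  also have "\<dots> = W \<nu> * ideal_proj S * cstar (W \<nu>)"
    using ideal_proj_eq[OF S] finite_of_degree[of "d \<nu>"] by (simp add: of_degree_def)
  finally show ?thesis .
qed

lemma ideal_proj_fg_ideal: "ideal_proj (fg_ideal xs) = 1 - prod_list (map (\<lambda>l. 1 - range_proj l) xs)"
proof (induction xs)
  case Nil
  have "fg_ideal [] = {}" by (simp add: fg_ideal_def)
  then show ?case using ideal_proj_eq[OF determined_at_empty[OF zero_in_range_d]]
    by (simp add: level_proj_def)
next
  case (Cons x xs)
  have "1 - ideal_proj (fg_ideal (x # xs)) = (1 - ideal_proj (principal x)) * (1 - ideal_proj (fg_ideal xs))"
    unfolding fg_ideal_Cons by (rule ideal_proj_Un[OF determined_at_principal determined_at_fg_ideal])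
  then show ?case using Cons by (simp add: ideal_proj_principal algebra_simps)
qed

lemma level_proj_prod_list: "N \<in> range d \<Longrightarrow> prod_list (map (\<lambda>X. level_proj N (f X)) xs) = level_proj N (\<Inter>X\<in>set xs. f X)"
proof (induction xs)
  case Nil then show ?case using level_proj_UNIV by simp
next
  case (Cons x xs)
  then show ?case using level_proj_Int[OF Cons.prems, of "f x"] by (simp add: Int_commute)
qed

end

section \<open>Zappa--Szep products and their boundary representations\<close>

locale zs_monoid =
  fixes act :: "'g::group_add \<Rightarrow> 'p::monoid_mult \<Rightarrow> 'p" and restr :: "'g \<Rightarrow> 'p \<Rightarrow> 'g"
  assumes zappa_szep: "zappa_szep act restr"
begin

lemma act_0 [simp]: "act 0 u = u"
  and act_add: "act (a + b) u = act a (act b u)"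
  and act_1 [simp]: "act a 1 = 1"
  and act_mult: "act a (u * v) = act a u * act (restr a u) v"
  and restr_1 [simp]: "restr a 1 = a"
  and restr_mult: "restr a (u * v) = restr (restr a u) v"
  and restr_0 [simp]: "restr 0 u = 0"
  and restr_add: "restr (a + b) u = restr a (act b u) + restr b u"
  using zappa_szep by (simp_all add: zappa_szep_def)

lemma act_uminus_act [simp]: "act (- g) (act g u) = u"
  and act_act_uminus [simp]: "act g (act (- g) u) = u"
  using act_add[of "- g" g u] act_add[of g "- g" u] by simp_all

abbreviation m where "m \<equiv> zs_mult act restr"

lemma m_Pair: "m (u, a) (v, b) = (u * act a v, restr a v + b)"
  by (simp add: zs_mult_def)

lemma m_assoc: "m (m x y) z = m x (m y z)"
  by (cases x, cases y, cases z)
    (simp add: m_Pair act_mult restr_mult act_add restr_add mult.assoc add.assoc)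

lemma m_unit_left [simp]: "m (1, 0) y = y"
  and m_unit_right [simp]: "m y (1, 0) = y"
  by (cases y, simp add: m_Pair)+

lemma m_factor: "m (\<mu>, 0) (1, g) = (\<mu>, g)"
  and m_group: "m (1, g) (1, h) = (1, g + h)"
  and m_paths: "m (\<mu>, 0) (\<nu>, 0) = (\<mu> * \<nu>, 0)"
  and m_covariance: "m (1, g) (\<mu>, 0) = m (act g \<mu>, 0) (1, restr g \<mu>)"
  by (simp_all add: m_Pair)

lemma cword_right_ideal: "x \<in> cword m ps \<Longrightarrow> m x z \<in> cword m ps"
proof (induction ps arbitrary: x z)
  case (Cons pq ps)
  from Cons.prems obtain c where c: "c \<in> cword m ps" "m (fst pq) x = m (snd pq) c" by auto
  have "m (fst pq) (m x z) = m (snd pq) (m c z)" using c(2) by (simp flip: m_assoc)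
  then show ?case using Cons.IH[OF c(1)] by auto
qed simp

lemma cword_constructible: "cword m ps \<in> constructible m"
proof (cases "ps = []")
  case True
  have "cword m [((1, 0), (1, 0))] = UNIV" by auto
  then show ?thesis using True unfolding constructible_def by (auto intro!: exI[of _ "[((1, 0), (1, 0))]"])
qed (auto simp: constructible_def)

lemma cword_Cons_unit: "cword m (((1, 0), q) # ps) = m q ` cword m ps"
  by auto

lemma range_m_constructible: "range (m p) \<in> constructible m"
  using cword_constructible[of "[((1, 0), p)]"] by (simp add: image_def)

lemma boundary_rep_V_unit:
  assumes "boundary_rep m V E" shows "V (1, 0) = 1"
  using assms isometry_eq_1_if_idempotent m_unit_left unfolding boundary_rep_def by metis

lemma boundary_rep_E_range:
  assumes "boundary_rep m V E" shows "E (range (m p)) = V p * cstar (V p)"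
  using assms cword_constructible[of "[]"] unfolding boundary_rep_def by (metis cword.simps(1) mult_1_right)

text \<open>Since \<open>p\<^sup>-\<^sup>1 q X = p\<^sup>-\<^sup>1 (qX \<inter> pP)\<close>, the relations determine \<open>E\<close> on every constructible
  ideal from \<open>V\<close>.\<close>

lemma boundary_rep_E_cword_Cons:
  assumes br: "boundary_rep m V E"
  shows "E (cword m ((p, q) # ps)) = cstar (V p) * V q * E (cword m ps) * cstar (V q) * V p"
proof -
  have iso: "\<And>p. cstar (V p) * V p = 1" using br unfolding boundary_rep_def isometry_def by blast
  have conj: "\<And>p X. X \<in> constructible m \<Longrightarrow> V p * E X * cstar (V p) = E (m p ` X)"
    using br unfolding boundary_rep_def by blast
  have int: "\<And>X Y. X \<in> constructible m \<Longrightarrow> Y \<in> constructible m \<Longrightarrow> E X * E Y = E (X \<inter> Y)"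
    using br unfolding boundary_rep_def by blast
  define X where "X = cword m ((p, q) # ps)"
  define Y where "Y = m q ` cword m ps"
  have Yc: "Y \<in> constructible m"
    using cword_constructible[of "((1, 0), q) # ps"] by (simp only: cword_Cons_unit Y_def)
  have "V p * E X * cstar (V p) = E (m p ` X)"
    unfolding X_def by (rule conj[OF cword_constructible])
  also have "m p ` X = Y \<inter> range (m p)" by (auto simp: X_def Y_def)
  also have "E (Y \<inter> range (m p)) = E Y * (V p * cstar (V p))"
    using int[OF Yc range_m_constructible] boundary_rep_E_range[OF br] by simp
  finally have "V p * E X * cstar (V p) = E Y * (V p * cstar (V p))" .
  then have "cstar (V p) * (V p * E X * cstar (V p)) * V p = cstar (V p) * (E Y * (V p * cstar (V p))) * V p"
    by simp
  then have "E X = cstar (V p) * E Y * V p"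
    by (simp add: mult.assoc iso) (simp add: iso flip: mult.assoc)
  then show ?thesis
    using conj[OF cword_constructible, of q ps] by (simp add: X_def Y_def mult.assoc)
qed

lemma boundary_rep_unique:
  assumes br: "boundary_rep m V E" and br': "boundary_rep m V' E'"
    and paths: "\<forall>\<mu>. V (\<mu>, 0) = V' (\<mu>, 0)" and group: "\<forall>g. V (1, g) = V' (1, g)"
  shows "(\<forall>p. V p = V' p) \<and> (\<forall>X\<in>constructible m. E X = E' X)"
proof -
  have VV: "V p = V' p" for p
  proof -
    obtain \<mu> g where p: "p = (\<mu>, g)" by (cases p)
    have "V p = V (\<mu>, 0) * V (1, g)" "V' p = V' (\<mu>, 0) * V' (1, g)"
      using br br' m_factor[of \<mu> g] unfolding p boundary_rep_def by metis+
    then show ?thesis using paths group by simp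
  qed
  have EE: "E (cword m ps) = E' (cword m ps)" for ps
  proof (induction ps)
    case Nil
    then show ?case using br br' by (simp add: boundary_rep_def)
  next
    case (Cons pq ps)
    obtain p q where pq: "pq = (p, q)" by (cases pq)
    show ?case
      unfolding pq boundary_rep_E_cword_Cons[OF br] boundary_rep_E_cword_Cons[OF br'] using Cons VV by simp
  qed
  have "E X = E' X" if "X \<in> constructible m" for X
    using that EE br br' by (auto simp: constructible_def boundary_rep_def)
  then show ?thesis using VV by blast
qed

end

section \<open>Boundary representations restrict to covariant representations\<close>

locale kgraph_zs = kgraph K d + zs_monoid act restr
  for K :: "nat set" and d :: "'p::monoid_mult \<Rightarrow> nat \<Rightarrow> nat"
  and act :: "'g::group_add \<Rightarrow> 'p \<Rightarrow> 'p" and restr :: "'g \<Rightarrow> 'p \<Rightarrow> 'g"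
begin

lemma principal_paths_disjoint:
  assumes "d \<mu> = d \<mu>'" and "\<mu> \<noteq> \<mu>'"
  shows "range (m (\<mu>, 0)) \<inter> range (m (\<mu>', 0)) = {}"
proof -
  have "\<mu> * a \<noteq> \<mu>' * b" for a b
    using factorization_unique[OF assms(1)] assms(2) by blast
  then show ?thesis by (auto simp: m_Pair) metis
qed

text \<open>Given \<open>(\<nu>, g)\<close>, right multiplication by \<open>(g\<^sup>-\<^sup>1 \<cdot> \<mu>\<^sub>0, 0)\<close> with \<open>d \<mu>\<^sub>0 = e\<^sub>i\<close> produces
  the path \<open>\<nu> \<mu>\<^sub>0\<close>, which starts with an edge of colour i.\<close>

lemma principal_paths_foundation_set:
  assumes i: "i \<in> K"
  shows "foundation_set m ((\<lambda>\<mu>. range (m (\<mu>, 0))) ` {\<mu>. d \<mu> = ebasis i})"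
  unfolding foundation_set_def
proof (intro conjI ballI impI)
  show "finite ((\<lambda>\<mu>. range (m (\<mu>, 0))) ` {\<mu>. d \<mu> = ebasis i})"
    using edges_finite_nonempty[OF i] by simp
  show "(\<lambda>\<mu>. range (m (\<mu>, 0))) ` {\<mu>. d \<mu> = ebasis i} \<subseteq> constructible m"
    using range_m_constructible by auto
  fix Y assume "Y \<in> constructible m" and "Y \<noteq> {}"
  then obtain ps \<nu> g where Y: "Y = cword m ps" and y: "(\<nu>, g) \<in> Y"
    by (auto simp: constructible_def)
  obtain \<mu>\<^sub>0 where \<mu>\<^sub>0: "d \<mu>\<^sub>0 = ebasis i" using edges_finite_nonempty[OF i] by auto
  then have "d (\<nu> * \<mu>\<^sub>0) = ebasis i + d \<nu>" by (simp add: d_mult add.commute)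
  then obtain \<mu> \<rho> where \<mu>: "d \<mu> = ebasis i" "\<nu> * \<mu>\<^sub>0 = \<mu> * \<rho>" using factorization by blast
  have "m (\<nu>, g) (act (- g) \<mu>\<^sub>0, 0) = m (\<mu>, 0) (\<rho>, restr g (act (- g) \<mu>\<^sub>0))"
    using \<mu>(2) by (simp add: m_Pair)
  moreover have "m (\<nu>, g) (act (- g) \<mu>\<^sub>0, 0) \<in> Y" using cword_right_ideal y Y by blast
  ultimately show "\<exists>X\<in>(\<lambda>\<mu>. range (m (\<mu>, 0))) ` {\<mu>. d \<mu> = ebasis i}. X \<inter> Y \<noteq> {}"
    using \<mu>(1) by (metis (mono_tags, lifting) IntI empty_iff imageI mem_Collect_eq rangeI)
qed

lemma boundary_rep_ck_relation:
  assumes br: "boundary_rep m V E" and i: "i \<in> K"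
  shows "(\<Sum>\<mu>\<in>{\<mu>. d \<mu> = ebasis i}. V (\<mu>, 0) * cstar (V (\<mu>, 0))) = 1"
proof -
  define D where "D = {\<mu>. d \<mu> = ebasis i}"
  define P where "P \<mu> = range (m (\<mu>, 0))" for \<mu>
  obtain ls where ls: "distinct ls" "set ls = D"
    using finite_distinct_list edges_finite_nonempty[OF i] by (metis D_def)
  have EP: "E (P \<mu>) = V (\<mu>, 0) * cstar (V (\<mu>, 0))" for \<mu>
    unfolding P_def by (rule boundary_rep_E_range[OF br])
  have disj: "P \<mu> \<inter> P \<mu>' = {}" if "\<mu> \<in> D" "\<mu>' \<in> D" "\<mu> \<noteq> \<mu>'" for \<mu> \<mu>'
    using principal_paths_disjoint that by (simp add: P_def D_def)
  have inj: "inj_on P D"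
  proof (rule inj_onI)
    fix \<mu> \<mu>' assume "\<mu> \<in> D" "\<mu>' \<in> D" "P \<mu> = P \<mu>'"
    moreover have "(\<mu>, 0) \<in> P \<mu>" unfolding P_def by (metis m_unit_right rangeI)
    ultimately show "\<mu> = \<mu>'" using disj by blast
  qed
  have "foundation_set m (P ` D)"
    using principal_paths_foundation_set[OF i] by (simp add: P_def D_def)
  moreover have "distinct (map P ls)" "set (map P ls) = P ` D"
    using inj ls by (simp_all add: distinct_map)
  ultimately have "prod_list (map (\<lambda>X. 1 - E X) (map P ls)) = 0"
    using br unfolding boundary_rep_def by blast
  moreover have "prod_list (map (\<lambda>\<mu>. 1 - E (P \<mu>)) ls) = 1 - (\<Sum>\<mu>\<in>set ls. E (P \<mu>))"
  proof (rule prod_list_one_minus_orthogonal[OF ls(1)])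
    fix \<mu> \<mu>' assume "\<mu> \<in> set ls" "\<mu>' \<in> set ls" "\<mu> \<noteq> \<mu>'"
    then show "E (P \<mu>) * E (P \<mu>') = 0"
      using br disj ls range_m_constructible unfolding boundary_rep_def P_def by auto
  qed
  ultimately show ?thesis using ls by (simp add: D_def EP comp_def)
qed

lemma boundary_rep_covariant:
  assumes br: "boundary_rep m V E"
  shows "covariant_rep K d act restr (\<lambda>g. V (1, g)) (\<lambda>\<mu>. V (\<mu>, 0))"
proof -
  have iso: "\<And>p. cstar (V p) * V p = 1" and V_m: "\<And>p q. V (m p q) = V p * V q"
    using br unfolding boundary_rep_def isometry_def by blast+
  have V_unit: "V (1, 0) = 1" by (rule boundary_rep_V_unit[OF br])
  have inverse: "V (1, g) * V (1, - g) = 1" for g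
    using V_m[of "(1, g)" "(1, - g)"] V_unit by (simp add: m_group)
  have "cstar (V (1, g)) = cstar (V (1, g)) * (V (1, g) * V (1, - g))" for g
    using inverse by simp
  then have "cstar (V (1, g)) = V (1, - g)" for g
    using iso by (simp flip: mult.assoc)
  then have "unitary (V (1, g))" for g
    using iso[of "(1, g)"] inverse[of g] by (simp add: unitary_def)
  then show ?thesis
    unfolding covariant_rep_def isometry_def
    using iso V_unit boundary_rep_ck_relation[OF br] V_m[of "(1, _)" "(1, _)"] V_m[of "(_, 0)" "(_, 0)"]
      V_m[of "(1, _)" "(_, 0)"] V_m[of "(act _ _, 0)" "(1, restr _ _)"]
    by (simp add: m_group m_paths m_covariance)
qed

end

section \<open>Covariant representations extend to boundary representations\<close>

context kgraph_zs
begin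

lemma act_principal: "act g ` principal l = principal (act g l)"
proof
  show "act g ` principal l \<subseteq> principal (act g l)"
    by (auto simp: principal_def act_mult)
  show "principal (act g l) \<subseteq> act g ` principal l"
  proof
    fix x assume "x \<in> principal (act g l)"
    then obtain b where b: "x = act g l * b" by (auto simp: principal_def)
    have "act g (l * act (- restr g l) b) = x" by (simp add: act_mult b)
    then show "x \<in> act g ` principal l" by (auto simp: principal_def)
  qed
qed

lemma act_fg_ideal: "act g ` fg_ideal xs = fg_ideal (map (act g) xs)"
  by (auto simp: fg_ideal_def image_UN act_principal)

lemma mult_fg_ideal: "(*) \<nu> ` fg_ideal xs = fg_ideal (map ((*) \<nu>) xs)"
  by (auto simp: fg_ideal_def principal_def mult.assoc)

text \<open>If \<open>\<nu> a \<in> l P\<close>, then \<open>a\<close> has a prefix \<open>\<beta>\<close> of degree \<open>d l - d \<nu>\<close> (truncated), and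
  already \<open>\<nu> \<beta> \<in> l P\<close>; there are only finitely many such \<open>\<beta>\<close>.\<close>

lemma preimage_mult_principal: "\<exists>zs. {a. \<nu> * a \<in> principal l} = fg_ideal zs"
proof -
  define B where "B = of_degree (d l - d \<nu>) \<inter> {\<beta>. \<nu> * \<beta> \<in> principal l}"
  obtain zs where zs: "set zs = B" using finite_list finite_of_degree by (metis B_def finite_Int)
  have "{a. \<nu> * a \<in> principal l} \<subseteq> fg_ideal zs"
  proof
    fix a assume "a \<in> {a. \<nu> * a \<in> principal l}"
    then obtain c where c: "\<nu> * a = l * c" by (auto simp: principal_def)
    then have "d l \<le> d \<nu> + d a" by (simp add: le_fun_def flip: d_mult) (metis d_mult le_add1 plus_fun_apply)
    then have "d l - d \<nu> \<le> d a" by (simp add: le_fun_def) (metis add.commute le_diff_conv)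
    then obtain \<beta> a' where \<beta>: "d \<beta> = d l - d \<nu>" "a = \<beta> * a'"
      using factorization[OF le_fun_eq_add_diff] by blast
    have "d l \<le> d (\<nu> * \<beta>)" using \<beta>(1) by (simp add: d_mult le_fun_def) arith
    moreover have "(\<nu> * \<beta>) * a' = l * c" using c \<beta> by (simp add: mult.assoc)
    ultimately obtain x where "\<nu> * \<beta> = l * x" using prefix_if_common_extension by blast
    then have "\<beta> \<in> B" using \<beta> by (auto simp: B_def of_degree_def principal_def)
    then show "a \<in> fg_ideal zs" using \<beta> zs by (auto simp: fg_ideal_def principal_def)
  qed
  moreover have "fg_ideal zs \<subseteq> {a. \<nu> * a \<in> principal l}"
  proof
    fix a assume "a \<in> fg_ideal zs"
    then obtain \<beta> c where "\<beta> \<in> B" "a = \<beta> * c" using zs by (auto simp: fg_ideal_def principal_def)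
    moreover from \<open>\<beta> \<in> B\<close> obtain e where "\<nu> * \<beta> = l * e" by (auto simp: B_def principal_def)
    ultimately have "\<nu> * a = l * (e * c)" by (simp add: mult.assoc[symmetric])
    then show "a \<in> {a. \<nu> * a \<in> principal l}" by (auto simp: principal_def)
  qed
  ultimately show ?thesis by blast
qed

lemma preimage_mult_fg_ideal: "\<exists>zs. {a. \<nu> * a \<in> fg_ideal ys} = fg_ideal zs"
proof -
  obtain f where f: "\<And>l. {a. \<nu> * a \<in> principal l} = fg_ideal (f l)"
    using preimage_mult_principal by metis
  have "{a. \<nu> * a \<in> fg_ideal ys} = (\<Union>l\<in>set ys. {a. \<nu> * a \<in> principal l})"
    by (auto simp: fg_ideal_def)
  also have "\<dots> = fg_ideal (concat (map f ys))"
    by (auto simp: f fg_ideal_def)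
  finally show ?thesis by blast
qed

lemma preimage_act: "{a. act g a \<in> S} = act (- g) ` S"
proof
  show "{a. act g a \<in> S} \<subseteq> act (- g) ` S"
    using act_uminus_act by (metis (mono_tags, lifting) image_eqI mem_Collect_eq subsetI)
qed auto

lemma image_m_times_UNIV: "m (\<nu>, g) ` (S \<times> UNIV) = ((*) \<nu> ` act g ` S) \<times> UNIV"
proof
  show "((*) \<nu> ` act g ` S) \<times> UNIV \<subseteq> m (\<nu>, g) ` (S \<times> UNIV)"
  proof
    fix x :: "'p \<times> 'g" assume "x \<in> ((*) \<nu> ` act g ` S) \<times> UNIV"
    then obtain a k where x: "x = (\<nu> * act g a, k)" "a \<in> S" by auto
    then have "x = m (\<nu>, g) (a, - restr g a + k)" by (simp add: m_Pair add.assoc[symmetric])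
    then show "x \<in> m (\<nu>, g) ` (S \<times> UNIV)" using x(2) by blast
  qed
qed (auto simp: m_Pair)

text \<open>Because G is a group, every constructible ideal of the Zappa--Szep product is
  \<open>S \<times> G\<close> for a finitely generated right ideal S of the k-graph.\<close>

lemma cword_eq_fg_ideal_times_UNIV: "\<exists>xs. cword m ps = fg_ideal xs \<times> UNIV"
proof (induction ps)
  case Nil
  have "fg_ideal [1] = UNIV" by (auto simp: fg_ideal_def principal_def)
  then show ?case by (metis UNIV_Times_UNIV cword.simps(1))
next
  case (Cons pq ps)
  obtain xs where IH: "cword m ps = fg_ideal xs \<times> UNIV" using Cons by blast
  obtain \<nu> g \<nu>' g' where pq: "pq = ((\<nu>, g), (\<nu>', g'))" by (cases pq) auto
  obtain zs where zs: "{a. \<nu> * a \<in> fg_ideal (map ((*) \<nu>') (map (act g') xs))} = fg_ideal zs"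
    using preimage_mult_fg_ideal by blast
  have "cword m (pq # ps) = {y. m (\<nu>, g) y \<in> fg_ideal (map ((*) \<nu>') (map (act g') xs)) \<times> UNIV}"
    using IH by (simp add: pq image_m_times_UNIV act_fg_ideal mult_fg_ideal)
  also have "\<dots> = {a. act g a \<in> fg_ideal zs} \<times> UNIV"
    using zs by (auto simp: m_Pair)
  also have "{a. act g a \<in> fg_ideal zs} = fg_ideal (map (act (- g)) zs)"
    unfolding preimage_act act_fg_ideal ..
  finally show ?case by blast
qed

lemma constructible_eq_fg_ideal_times_UNIV:
  "X \<in> constructible m \<Longrightarrow> \<exists>xs. X = fg_ideal xs \<times> UNIV"
proof -
  assume "X \<in> constructible m"
  then have "X = {} \<or> (\<exists>ps. X = cword m ps)" by (auto simp: constructible_def)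
  moreover have "{} = fg_ideal [] \<times> UNIV" by (simp add: fg_ideal_def)
  ultimately show ?thesis using cword_eq_fg_ideal_times_UNIV by blast
qed

end

locale covariant_pair = kgraph_zs K d act restr
  for K :: "nat set" and d :: "'p::monoid_mult \<Rightarrow> nat \<Rightarrow> nat"
  and act :: "'g::group_add \<Rightarrow> 'p \<Rightarrow> 'p" and restr :: "'g \<Rightarrow> 'p \<Rightarrow> 'g" +
  fixes U :: "'g \<Rightarrow> 'b::cstar_algebra" and W :: "'p \<Rightarrow> 'b"
  assumes covariant: "covariant_rep K d act restr U W"
begin

sublocale ck_family K d W
  using covariant unfolding covariant_rep_def by unfold_locales auto

lemma U_adj_U: "cstar (U g) * U g = 1" and U_U_adj: "U g * cstar (U g) = 1"
  using covariant by (auto simp: covariant_rep_def unitary_def)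

lemma U_add: "U (g + h) = U g * U h"
  and U_W: "U g * W \<mu> = W (act g \<mu>) * U (restr g \<mu>)"
  using covariant by (simp_all add: covariant_rep_def)

lemma U_0: "U 0 = 1"
  using U_add[of 0 0] U_adj_U[of 0] by (metis add_0 isometry_def isometry_eq_1_if_idempotent)

lemma U_range_proj_U_adj: "U g * range_proj l * cstar (U g) = range_proj (act g l)"
proof -
  have "U g * range_proj l * cstar (U g) = (U g * W l) * cstar (U g * W l)"
    by (simp add: range_proj_def cstar_mult mult.assoc)
  also have "\<dots> = W (act g l) * (U (restr g l) * cstar (U (restr g l))) * cstar (W (act g l))"
    by (simp add: U_W cstar_mult mult.assoc)
  finally show ?thesis by (simp add: U_U_adj range_proj_def)
qed

lemma U_prod_list_U_adj:
  "U g * prod_list xs * cstar (U g) = prod_list (map (\<lambda>x. U g * x * cstar (U g)) xs)"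
proof (induction xs)
  case (Cons x xs)
  have "U g * prod_list (x # xs) * cstar (U g)
      = (U g * x * cstar (U g)) * (U g * prod_list xs * cstar (U g))"
    by (simp add: mult.assoc) (simp add: U_adj_U flip: mult.assoc)
  then show ?case using Cons by simp
qed (simp add: U_U_adj)

lemma ideal_proj_act: "ideal_proj (act g ` fg_ideal xs) = U g * ideal_proj (fg_ideal xs) * cstar (U g)"
proof -
  have "U g * (1 - range_proj l) * cstar (U g) = 1 - range_proj (act g l)" for l
    by (simp only: right_diff_distrib left_diff_distrib mult_1_right U_U_adj U_range_proj_U_adj)
  then have "U g * prod_list (map (\<lambda>l. 1 - range_proj l) xs) * cstar (U g)
      = prod_list (map (\<lambda>l. 1 - range_proj l) (map (act g) xs))"
    by (simp add: U_prod_list_U_adj comp_def)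
  moreover have "U g * ideal_proj (fg_ideal xs) * cstar (U g)
      = U g * cstar (U g) - U g * prod_list (map (\<lambda>l. 1 - range_proj l) xs) * cstar (U g)"
    by (simp only: ideal_proj_fg_ideal right_diff_distrib left_diff_distrib mult_1_right)
  ultimately show ?thesis
    by (simp only: U_U_adj act_fg_ideal ideal_proj_fg_ideal)
qed

definition extV :: "'p \<times> 'g \<Rightarrow> 'b" where "extV x = W (fst x) * U (snd x)"
definition extE :: "('p \<times> 'g) set \<Rightarrow> 'b" where "extE X = ideal_proj (fst ` X)"

text \<open>A foundation set F meets every ideal \<open>(\<rho>, 0) P\<close>; choosing \<open>d \<rho>\<close> beyond the degrees
  at which all members of F are determined shows that every such \<open>\<rho>\<close> lies in the union of
  F, so \<open>\<Prod>(1 - E X) = \<Sum>{v\<^sub>\<rho> v\<^sub>\<rho>\<^sup>* | \<rho> \<notin> \<Union>F} = 0\<close>.\<close>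

lemma extE_foundation_set:
  assumes fs: "foundation_set m F" and xs: "distinct xs" "set xs = F"
  shows "prod_list (map (\<lambda>X. 1 - extE X) xs) = 0"
proof -
  have "\<exists>N. determined_at (fst ` X) N" if "X \<in> set xs" for X
  proof -
    have "X \<in> constructible m" using that xs fs by (auto simp: foundation_set_def)
    then obtain ys where "X = fg_ideal ys \<times> UNIV" using constructible_eq_fg_ideal_times_UNIV by blast
    then show ?thesis using determined_at_fg_ideal by auto
  qed
  then obtain N where N: "N \<in> range d" "\<forall>X\<in>set xs. determined_at (fst ` X) N"
    using determined_at_common[of xs "\<lambda>X. fst ` X"] by blast
  have "map (\<lambda>X. 1 - extE X) xs = map (\<lambda>X. level_proj N (- fst ` X)) xs"
    using N by (simp add: extE_def ideal_proj_eq level_proj_Compl)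
  then have "prod_list (map (\<lambda>X. 1 - extE X) xs) = level_proj N (\<Inter>X\<in>set xs. - fst ` X)"
    using level_proj_prod_list[OF N(1), of "\<lambda>X. - fst ` X" xs] by (simp only:)
  also have "\<dots> = 0"
  proof (rule ccontr)
    assume "level_proj N (\<Inter>X\<in>set xs. - fst ` X) \<noteq> 0"
    then have "of_degree N \<inter> (\<Inter>X\<in>set xs. - fst ` X) \<noteq> {}"
      by (auto simp: level_proj_def)
    then obtain \<rho> where "\<rho> \<in> of_degree N \<inter> (\<Inter>X\<in>set xs. - fst ` X)"
      by auto
    then have \<rho>: "d \<rho> = N" "\<forall>X\<in>F. \<rho> \<notin> fst ` X" using xs by (auto simp: of_degree_def)
    have "\<exists>X\<in>F. X \<inter> Y \<noteq> {}" if "Y \<in> constructible m" "Y \<noteq> {}" for Y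
      using fs that by (simp add: foundation_set_def)
    then obtain X where X: "X \<in> F" "X \<inter> range (m (\<rho>, 0)) \<noteq> {}"
      using range_m_constructible by blast
    then obtain a h where "m (\<rho>, 0) (a, h) \<in> X" by auto
    moreover have "m (\<rho>, 0) (a, h) = (\<rho> * a, h)" by (simp add: m_Pair)
    ultimately have "\<rho> * a \<in> fst ` X" by (metis fst_conv image_eqI)
    moreover have "determined_at (fst ` X) (d \<rho>)" using N(2) X(1) xs(2) \<rho>(1) by simp
    ultimately show False using \<rho>(2) X(1) by (simp add: determined_at_def)
  qed
  finally show ?thesis .
qed

lemma extV_isometry: "isometry (extV p)"
proof -
  have "cstar (extV p) * extV p = cstar (U (snd p)) * (cstar (W (fst p)) * W (fst p)) * U (snd p)"
    by (simp add: extV_def cstar_mult mult.assoc)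
  then show ?thesis by (simp add: isometry_def W_adj_W U_adj_U)
qed

lemma extV_mult: "extV (m p q) = extV p * extV q"
proof -
  obtain a g where p: "p = (a, g)" by (cases p)
  obtain b h where q: "q = (b, h)" by (cases q)
  have "extV (m p q) = W a * (W (act g b) * U (restr g b)) * U h"
    by (simp add: p q m_Pair extV_def W_mult U_add mult.assoc)
  then show ?thesis by (simp add: p q extV_def U_W[symmetric] mult.assoc)
qed

lemma extV_extE_conj:
  assumes "X \<in> constructible m"
  shows "extV p * extE X * cstar (extV p) = extE (m p ` X)"
proof -
  obtain xs where X: "X = fg_ideal xs \<times> UNIV" using constructible_eq_fg_ideal_times_UNIV[OF assms] by blast
  obtain \<nu> g where p: "p = (\<nu>, g)" by (cases p)
  have "extE (m p ` X) = ideal_proj ((*) \<nu> ` fg_ideal (map (act g) xs))"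
    by (simp add: p X image_m_times_UNIV extE_def act_fg_ideal)
  also have "\<dots> = W \<nu> * ideal_proj (fg_ideal (map (act g) xs)) * cstar (W \<nu>)"
    by (rule ideal_proj_image_mult[OF determined_at_fg_ideal])
  also have "ideal_proj (fg_ideal (map (act g) xs)) = U g * ideal_proj (fg_ideal xs) * cstar (U g)"
    using ideal_proj_act[of g xs] by (simp add: act_fg_ideal)
  finally show ?thesis by (simp add: p X extE_def extV_def cstar_mult mult.assoc)
qed

lemma boundary_rep_extension:
  "boundary_rep m extV extE \<and> (\<forall>\<mu>. extV (\<mu>, 0) = W \<mu>) \<and> (\<forall>g. extV (1, g) = U g)"
proof -
  have proj: "projection (extE X)" if "X \<in> constructible m" for X
    using constructible_eq_fg_ideal_times_UNIV[OF that] projection_ideal_proj[OF determined_at_fg_ideal]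
    by (auto simp: extE_def)
  have int: "extE X * extE Y = extE (X \<inter> Y)"
    if "X \<in> constructible m" "Y \<in> constructible m" for X Y
    using constructible_eq_fg_ideal_times_UNIV[OF that(1)] constructible_eq_fg_ideal_times_UNIV[OF that(2)]
      ideal_proj_Int[OF determined_at_fg_ideal determined_at_fg_ideal]
    by (auto simp: extE_def Times_Int_Times)
  have E_empty: "extE {} = 0" and E_UNIV: "extE UNIV = 1"
    using ideal_proj_eq[OF determined_at_empty[OF zero_in_range_d]]
      ideal_proj_eq[OF determined_at_UNIV[OF zero_in_range_d]] level_proj_UNIV[OF zero_in_range_d]
    by (simp_all add: extE_def level_proj_def)
  have "boundary_rep m extV extE"
    unfolding boundary_rep_def
    using extV_isometry extV_mult proj extV_extE_conj int E_empty E_UNIV extE_foundation_set by blast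
  then show ?thesis by (simp add: extV_def U_0 W_1)
qed

end

theorem mainTheorem4:
  fixes K :: "nat set"
    and d :: "'p::monoid_mult \<Rightarrow> nat \<Rightarrow> nat"
    and act :: "'g::group_add \<Rightarrow> 'p \<Rightarrow> 'p"
    and restr :: "'g \<Rightarrow> 'p \<Rightarrow> 'g"
  assumes "single_vertex_kgraph K d"
    and "zappa_szep act restr"
    and "\<forall>\<mu> h. \<exists>g. restr g \<mu> = h"
  shows
    "(\<forall>(V :: 'p \<times> 'g \<Rightarrow> 'b::cstar_algebra) E. boundary_rep (zs_mult act restr) V E \<longrightarrow>
        covariant_rep K d act restr (\<lambda>g. V (1, g)) (\<lambda>\<mu>. V (\<mu>, 0))) \<and>
     (\<forall>(U :: 'g \<Rightarrow> 'b) W. covariant_rep K d act restr U W \<longrightarrow>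
        (\<exists>V E. boundary_rep (zs_mult act restr) V E \<and>
           (\<forall>\<mu>. V (\<mu>, 0) = W \<mu>) \<and> (\<forall>g. V (1, g) = U g))) \<and>
     (\<forall>(V :: 'p \<times> 'g \<Rightarrow> 'b) E V' E'.
        boundary_rep (zs_mult act restr) V E \<and> boundary_rep (zs_mult act restr) V' E' \<and>
        (\<forall>\<mu>. V (\<mu>, 0) = V' (\<mu>, 0)) \<and> (\<forall>g. V (1, g) = V' (1, g)) \<longrightarrow>
        (\<forall>p. V p = V' p) \<and> (\<forall>X\<in>constructible (zs_mult act restr). E X = E' X))"
proof -
  interpret kgraph_zs K d act restr
    using assms(1, 2) by (simp add: kgraph_zs_def kgraph_def zs_monoid_def)
  have extend: "\<exists>V E. boundary_rep m V E \<and> (\<forall>\<mu>. V (\<mu>, 0) = W \<mu>) \<and> (\<forall>g. V (1, g) = U g)"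
    if "covariant_rep K d act restr U W" for U :: "'g \<Rightarrow> 'b" and W
  proof -
    interpret covariant_pair K d act restr U W
      using that by unfold_locales
    show ?thesis using boundary_rep_extension by blast
  qed
  show ?thesis
    using boundary_rep_covariant extend boundary_rep_unique by (intro conjI allI impI) blast+
qed

end
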